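(* Let $\mathscr{C}^1$ and $\mathscr{C}^2$ be composable msCRCs satisfying assumptions (A.1) and (A.2), with $\bar y^1$ and $\bar y^2$ having positive entries, and let $\tilde{\mathscr{C}}^2$ be the reduced system of $\mathscr{C}^2$, with species $Z_1,\dots,Z_p$ (the output species of $\mathscr{C}^2$) and reactions $\tilde v_{\cdot j}\to\tilde v'_{\cdot j}$, $j=1,\dots,r$. Suppose: (1) the stoichiometric subspace of $\tilde{\mathscr{C}}^2$ has dimension $1$; (2) for all $y\in\mathbb{R}^p_{>0}$, $\omega^\top\frac{\partial G}{\partial y}(y,u)\big|_{u=\tilde u(y)}<0$, where $\omega,m_j,G,\tilde u$ are as defined below, computed for the mass-action system $\dot y^2=g^2(\bar y^1,y^2)$ (i.e. the reduced system with rates evaluated at the input value $\bar y^1$); (3) the trajectory $y^2(t)$ of the coupled system is persistent. Then $\mathscr{C}^1$ and $\mathscr{C}^2$ are dynamically composable.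
   Context: CRN/MAS: reactions $v_{\cdot j}\to v'_{\cdot j}$, rate constants $k_j>0$, dynamics $\dot s=\sum_jk_js^{v_{\cdot j}}(v'_{\cdot j}-v_{\cdot j})$, $s^v=\prod_is_i^{v_i}$, $0^0=1$; stoichiometric subspace $\mathscr{S}=\mathrm{span}\{v'_{\cdot j}-v_{\cdot j}\}$. msCRC: a tuple $(\mathcal{S},\mathcal{C},\mathcal{R},\kappa,\mathcal{X},\mathcal{Y})$ with $(\mathcal{S},\mathcal{C},\mathcal{R},\kappa)$ an MAS, $\mathcal{X}\subset\mathcal{S}$ input species, $\mathcal{Y}=\mathcal{S}\setminus\mathcal{X}$ output species; dynamics $\dot x=f(x,y)$, $\dot y=g(x,y)$. Composable: $\mathcal{Y}^1=\mathcal{X}^2$ and $\mathcal{Y}^2\cap\mathcal{X}^1=\varnothing$. (A.1): $\mathscr{C}^1$ has dynamics $\dot x^1=f^1(x^1,y^1)$, $\dot y^1=g^1(x^1,y^1)$, $x^1(0)=x^1_0,y^1(0)=y^1_0$; $\mathscr{C}^2$ has dynamics $\dot x^2=0$, $\dot y^2=g^2(x^2,y^2)$, $x^2(0)=\bar y^1$, $y^2(0)=y^2_0$. (A.2): $y^1(t)\to\bar y^1$ for $\mathscr{C}^1$, and $y^2(t)\to\bar y^2$ for $\mathscr{C}^2$ with $x^2\equiv\bar y^1$. Dynamically composable: the coupled system $\dot x^1=f^1(x^1,y^1)$, $\dot y^1=g^1(x^1,y^1)$, $\dot y^2=g^2(y^1,y^2)$, $x^1(0)=x^1_0,y^1(0)=y^1_0,y^2(0)=y^2_0$,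 has $(y^1(t),y^2(t))\to(\bar y^1,\bar y^2)$. Reduced system of an msCRC: species $\mathcal{Y}$, complexes $\pi_{\mathcal{Y}}(\mathcal{C})$ (projection onto output coordinates), reactions $\pi_{\mathcal{Y}}(v_{\cdot j})\to\pi_{\mathcal{Y}}(v'_{\cdot j})$ with time-varying rates $\kappa_j\prod_{S_i\notin\mathcal{Y}}s_i(t)^{v_{ij}}$. Persistent: $\liminf_{t\to\infty}y^2_i(t)>0$ for all $i$. Definitions for condition (2): for an MAS with $\dim\mathscr{S}=1$ and rate constants $k_j$, fix $\omega\in\mathbb{R}^p\setminus\{0\}$ spanning $\mathscr{S}$ such that $v'_{\cdot j}-v_{\cdot j}=m_j\omega$ with $m_j\in\mathbb{Z}\setminus\{0\}$ for each reaction $j$. Define $$G(s,u)=\sum_{\{j:m_j>0\}}k_js^{v_{\cdot j}}\sum_{i=0}^{m_j-1}u^i+\sum_{\{j:m_j<0\}}k_js^{v_{\cdot j}}\Big(-\sum_{i=m_j}^{-1}u^i\Big),\quad s\in\mathbb{R}^p_{>0},\ u>0,$$ and let $\tilde u:\mathbb{R}^p_{>0}\to\mathbb{R}_{>0}$ be a function with $G(s,\tilde u(s))=0$ for all $s$. The derivative $\partial G/\partial s$ is the partial gradient in $s$ with $u$ held fixed. *)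

theory Defs
  imports "HOL-Analysis.Analysis"
begin

text \<open>A complex is a vector of nonnegative integer stoichiometric coefficients,
  a reaction is a triple (reactant complex v, product complex v', rate constant k).\<close>

type_synonym 's complex = "'s \<Rightarrow> nat"
type_synonym 's rxn = "'s complex \<times> 's complex \<times> real"

text \<open>Monomial s^v over the species set S (0^0 = 1 holds for Isabelle's power).\<close>
definition monom :: "'s set \<Rightarrow> ('s \<Rightarrow> real) \<Rightarrow> 's complex \<Rightarrow> real" where
  "monom S c v = (\<Prod>i\<in>S. c i ^ v i)"

definition mas_field :: "'s set \<Rightarrow> 's rxn list \<Rightarrow> ('s \<Rightarrow> real) \<Rightarrow> 's \<Rightarrow> real" where
  "mas_field S R c i =
     (\<Sum>(v, v', k) \<leftarrow> R. k * monom S c v * (real (v' i) - real (v i)))"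

text \<open>An msCRC given by species set S, reactions R (complexes supported on S,
  positive rate constants) and input species X; the outputs are S - X.\<close>
definition is_msCRC :: "'s set \<Rightarrow> 's rxn list \<Rightarrow> 's set \<Rightarrow> bool" where
  "is_msCRC S R X \<longleftrightarrow> X \<subseteq> S \<and>
     (\<forall>(v, v', k) \<in> set R. k > 0 \<and> (\<forall>i. i \<notin> S \<longrightarrow> v i = 0 \<and> v' i = 0))"

definition composable :: "'s set \<Rightarrow> 's set \<Rightarrow> 's set \<Rightarrow> 's set \<Rightarrow> bool" where
  "composable S1 X1 S2 X2 \<longleftrightarrow> S1 - X1 = X2 \<and> (S2 - X2) \<inter> X1 = {}"

definition ode_sol :: "'s set \<Rightarrow> (('s \<Rightarrow> real) \<Rightarrow> 's \<Rightarrow> real) \<Rightarrow> (real \<Rightarrow> 's \<Rightarrow> real) \<Rightarrow> bool" where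
  "ode_sol E F c \<longleftrightarrow>
     (\<forall>i\<in>E. \<forall>t\<ge>0. ((\<lambda>\<tau>. c \<tau> i) has_real_derivative F (c t) i) (at t within {0..}))"

definition proj_rvec :: "'s::finite set \<Rightarrow> 's rxn \<Rightarrow> real^'s" where
  "proj_rvec Y r = (\<chi> i. if i \<in> Y then real (fst (snd r) i) - real (fst r i) else 0)"

text \<open>Stoichiometric subspace of the reduced system (species Y, reactions
  pi_Y(v_j) -> pi_Y(v'_j)).\<close>
definition reduced_stoich :: "'s::finite set \<Rightarrow> 's rxn list \<Rightarrow> (real^'s) set" where
  "reduced_stoich Y R = span (proj_rvec Y ` set R)"

text \<open>Rate constant of reaction r in the MAS  dy2/dt = g2(ybar1, y2), i.e. the reduced
  system with the input species (S - Y) frozen at xbar:  k * prod_{i in S-Y} xbar_i^{v_i}.\<close>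
definition frozen_rate :: "'s set \<Rightarrow> 's set \<Rightarrow> ('s \<Rightarrow> real) \<Rightarrow> 's rxn \<Rightarrow> real" where
  "frozen_rate S Y xbar r = snd (snd r) * monom (S - Y) xbar (fst r)"

text \<open>The function G(y,u) of condition (2) for the one-dimensional MAS on species Y with
  reactions R (complexes projected on Y), rate constants K j, and integers m_j.\<close>
definition G_fun :: "'s set \<Rightarrow> 's rxn list \<Rightarrow> (nat \<Rightarrow> real) \<Rightarrow> (nat \<Rightarrow> int)
                      \<Rightarrow> ('s \<Rightarrow> real) \<Rightarrow> real \<Rightarrow> real" where
  "G_fun Y R K m y u =
     (\<Sum>j\<in>{j. j < length R \<and> m j > 0}.
         K j * monom Y y (fst (R ! j)) * (\<Sum>i\<in>{0..m j - 1}. u powi i))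
   + (\<Sum>j\<in>{j. j < length R \<and> m j < 0}.
         K j * monom Y y (fst (R ! j)) * (- (\<Sum>i\<in>{m j..-1}. u powi i)))"

definition omega_dG :: "'s::finite set \<Rightarrow> (('s \<Rightarrow> real) \<Rightarrow> real \<Rightarrow> real) \<Rightarrow> real^'s
                        \<Rightarrow> ('s \<Rightarrow> real) \<Rightarrow> real \<Rightarrow> real" where
  "omega_dG Y G \<omega> y u = (\<Sum>i\<in>Y. \<omega> $ i * deriv (\<lambda>x. G (y(i := x)) u) (y i))"

end

(*
  By condition (1) every reaction vector of the reduced system is a multiple m_j w of a single
  vector w, so the outputs of C^2 stay on the line y20 + sigma w, and the coupled dynamics reduce
  to the scalar equation sigma' = G_t(y20 + sigma w, 1), where G_t is G with the input frozen at
  its current value y^1(t).  By uniqueness of solutions y^1(t) -> ybar^1, hence G_t -> G.  The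
  frozen trajectory shows that ybar^2 = y20 + s0 w with G(ybar^2, 1) = 0.

  Some m_j is negative, so G(y, .) is strictly increasing and utilde(y) is its only positive
  root; condition (2) then says that s |-> G(y20 + s w, u) has only downward zero crossings.
  Consequently, for A > s0, the root u_A = utilde(y20 + A w) exceeds 1 and
  G(y20 + s w, u_A) <= 0 for all s >= A.  Bounding the q-integers [m_j]_u from below by their
  linearizations turns this into a negative drift of sigma above A, uniform once the rates are
  close to their limits and persistence bounds the monomials from below.  Hence sigma is
  eventually below every A > s0; the symmetry (w, m, u) -> (-w, -m, 1/u) gives the matching
  lower bound, so sigma -> s0, that is, y^2(t) -> ybar^2.
*)
theory Submission
  imports Defs
begin

section \<open>Scalar functions on \<open>[0, \<infinity>)\<close>\<close>

lemma has_real_derivative_at_of_within_nonneg: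
  fixes f :: "real \<Rightarrow> real"
  assumes "t > 0" and "(f has_real_derivative D) (at t within {0..})"
  shows "(f has_real_derivative D) (at t)"
  using assms at_within_interior[of t "{0..}"] by simp

lemma continuous_on_nonneg_of_has_derivative:
  fixes f :: "real \<Rightarrow> real"
  assumes "\<forall>t\<ge>0. (f has_real_derivative f' t) (at t within {0..})"
  shows "continuous_on {0..} f"
  unfolding continuous_on_eq_continuous_within
  using assms by (auto intro: has_derivative_continuous simp: has_field_derivative_def)

lemma mvt_nonneg:
  fixes f :: "real \<Rightarrow> real"
  assumes d: "\<forall>t\<ge>0. (f has_real_derivative f' t) (at t within {0..})"
    and "0 \<le> a" "a < b"
  shows "\<exists>z. a < z \<and> z < b \<and> f b - f a = (b - a) * f' z"
proof -
  have deriv_at: "(f has_real_derivative f' x) (at x)" if "a < x" for x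
    using d that \<open>0 \<le> a\<close> by (intro has_real_derivative_at_of_within_nonneg) auto
  have "continuous_on {a..b} f"
    using continuous_on_nonneg_of_has_derivative[OF d]
    by (rule continuous_on_subset) (use \<open>0 \<le> a\<close> in auto)
  moreover have "\<And>x. a < x \<Longrightarrow> x < b \<Longrightarrow> f differentiable at x"
    using deriv_at real_differentiable_def by blast
  ultimately obtain l z where
    z: "a < z" "z < b" "(f has_real_derivative l) (at z)" "f b - f a = (b - a) * l"
    using MVT[OF \<open>a < b\<close>] by blast
  with deriv_at[of z] DERIV_unique show ?thesis by blast
qed

text \<open>By the mean value theorem \<open>f (t + 1) - f t = f' z\<^sub>t\<close> with \<open>z\<^sub>t \<in> (t, t + 1)\<close>; the left side
  tends to \<open>0\<close> and the right side to \<open>L\<close>.\<close>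
lemma derivative_limit_zero:
  fixes f :: "real \<Rightarrow> real"
  assumes d: "\<forall>t\<ge>0. (f has_real_derivative f' t) (at t within {0..})"
    and "(f \<longlongrightarrow> a) at_top" and "(f' \<longlongrightarrow> L) at_top"
  shows "L = 0"
proof -
  have "\<exists>z. t < z \<and> f (t + 1) - f t = f' z" if "0 \<le> t" for t
    using mvt_nonneg[OF d that, of "t + 1"] by auto
  then obtain z where z: "\<And>t. 0 \<le> t \<Longrightarrow> t < z t \<and> f (t + 1) - f t = f' (z t)"
    by metis
  have ev: "eventually (\<lambda>t. t < z t \<and> f (t + 1) - f t = f' (z t)) at_top"
    using eventually_ge_at_top[of "0::real"] by (rule eventually_mono) (use z in blast)
  have "filterlim z at_top at_top"
    using filterlim_ident by (rule filterlim_at_top_mono) (use ev in \<open>auto elim: eventually_mono\<close>)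
  then have "((\<lambda>t. f' (z t)) \<longlongrightarrow> L) at_top"
    using \<open>(f' \<longlongrightarrow> L) at_top\<close> by (rule filterlim_compose[rotated])
  moreover have "filterlim (\<lambda>t::real. t + 1) at_top at_top"
    by (rule filterlim_at_top_mono[OF filterlim_ident]) simp
  then have "((\<lambda>t. f (t + 1)) \<longlongrightarrow> a) at_top"
    using \<open>(f \<longlongrightarrow> a) at_top\<close> by (rule filterlim_compose[rotated])
  then have "((\<lambda>t. f (t + 1) - f t) \<longlongrightarrow> 0) at_top"
    using tendsto_diff[OF _ \<open>(f \<longlongrightarrow> a) at_top\<close>] by fastforce
  then have "((\<lambda>t. f' (z t)) \<longlongrightarrow> 0) at_top"
    by (rule Lim_transform_eventually) (use ev in \<open>auto elim: eventually_mono\<close>)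
  ultimately show ?thesis
    using tendsto_unique[OF trivial_limit_at_top_linorder] by blast
qed

lemma DERIV_neg_exists_left:
  fixes f :: "real \<Rightarrow> real"
  assumes "(f has_real_derivative D) (at x)" and "D < 0" and "a < x"
  shows "\<exists>p. a < p \<and> p < x \<and> f x < f p"
proof -
  obtain d where "d > 0" and dec: "\<forall>h>0. h < d \<longrightarrow> f x < f (x - h)"
    using DERIV_neg_dec_left[OF assms(1,2)] by blast
  define h where "h = min (d / 2) ((x - a) / 2)"
  have "0 < h" "h < d" "h < x - a"
    using \<open>d > 0\<close> \<open>a < x\<close> unfolding h_def by (auto simp: min_def)
  with dec show ?thesis by (intro exI[of _ "x - h"]) auto
qed

lemma DERIV_neg_exists_right:
  fixes f :: "real \<Rightarrow> real"
  assumes "(f has_real_derivative D) (at x)" and "D < 0" and "x < b"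
  shows "\<exists>q. x < q \<and> q < b \<and> f q < f x"
proof -
  obtain d where "d > 0" and dec: "\<forall>h>0. h < d \<longrightarrow> f (x + h) < f x"
    using DERIV_neg_dec_right[OF assms(1,2)] by blast
  define h where "h = min (d / 2) ((b - x) / 2)"
  have "0 < h" "h < d" "h < b - x"
    using \<open>d > 0\<close> \<open>x < b\<close> unfolding h_def by (auto simp: min_def)
  with dec show ?thesis by (intro exI[of _ "x + h"]) auto
qed

text \<open>Otherwise the last zero before a positive value would be followed first by negative values
  and then, by the intermediate value theorem, by another zero.\<close>
lemma neg_if_zeros_are_downcrossings:
  fixes f :: "real \<Rightarrow> real"
  assumes "a < x" and cont: "continuous_on {a..x} f" and "f a \<le> 0"
    and down: "\<And>y. a \<le> y \<Longrightarrow> y \<le> x \<Longrightarrow> f y = 0 \<Longrightarrow> \<exists>D<0. (f has_real_derivative D) (at y)"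
  shows "f x < 0"
proof (rule ccontr)
  assume "\<not> f x < 0"
  then obtain p where p: "a < p" "p \<le> x" "f p > 0"
    using down[of x] \<open>a < x\<close> DERIV_neg_exists_left[of f _ x a]
    by (cases "f x = 0") (fastforce dest: less_imp_le)+
  have cont_p: "continuous_on {a..p} f"
    using cont by (rule continuous_on_subset) (use p in auto)
  define Z where "Z = {y \<in> {a..p}. f y = 0}"
  have "Z \<noteq> {}"
    using IVT'[of f a 0 p] cont_p p \<open>f a \<le> 0\<close> by (auto simp: Z_def)
  moreover have bdd: "bdd_above Z" by (auto simp: Z_def bdd_above_def)
  moreover have "closed Z"
    unfolding Z_def using cont_p by (rule continuous_closed_preimage_constant) simp
  ultimately have "Sup Z \<in> Z" by (rule closed_contains_Sup)
  define s where "s = Sup Z"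
  have s: "a \<le> s" "s < p" "f s = 0"
    using \<open>Sup Z \<in> Z\<close> p by (auto simp: Z_def s_def order.order_iff_strict)
  then obtain q where q: "s < q" "q < p" "f q < 0"
    using down[of s] p DERIV_neg_exists_right[of f _ s p] by fastforce
  then obtain y where "q \<le> y" "y \<le> p" "f y = 0"
    using IVT'[of f q 0 p] continuous_on_subset[OF cont_p, of "{q..p}"] s p by auto
  then have "y \<in> Z" using q s by (auto simp: Z_def)
  then have "y \<le> s" unfolding s_def using bdd by (rule cSup_upper)
  with q \<open>q \<le> y\<close> show False by simp
qed

lemma exists_le_of_drift:
  fixes f :: "real \<Rightarrow> real"
  assumes d: "\<forall>t\<ge>0. (f has_real_derivative f' t) (at t within {0..})"
    and "\<alpha> > 0" and "T \<ge> 0" and drift: "\<And>t. T \<le> t \<Longrightarrow> A \<le> f t \<Longrightarrow> f' t \<le> - \<alpha>"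
  shows "\<exists>t\<ge>T. f t \<le> A"
proof (rule ccontr)
  assume "\<not> ?thesis"
  then have above: "\<And>t. T \<le> t \<Longrightarrow> A < f t" by force
  define t where "t = T + (f T - A) / \<alpha> + 1"
  have "0 < (f T - A) / \<alpha>" using above[of T] \<open>\<alpha> > 0\<close> by simp
  then have "T < t" by (simp add: t_def)
  then obtain z where z: "T < z" "z < t" "f t - f T = (t - T) * f' z"
    using mvt_nonneg[OF d \<open>T \<ge> 0\<close>] by blast
  have "f' z \<le> - \<alpha>" using drift above[of z] z by (simp add: less_imp_le)
  then have "f t - f T \<le> (t - T) * (- \<alpha>)"
    unfolding z(3) using \<open>T < t\<close> by (intro mult_left_mono) auto
  also have "\<dots> = - (f T - A) - \<alpha>" using \<open>\<alpha> > 0\<close> by (simp add: t_def field_simps)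
  finally have "f t < A" using \<open>\<alpha> > 0\<close> by simp
  with above[of t] \<open>T < t\<close> show False by simp
qed

text \<open>The level \<open>A\<close> is eventually reached, and afterwards it can only be crossed downwards.\<close>
lemma eventually_le_of_drift:
  fixes f :: "real \<Rightarrow> real"
  assumes d: "\<forall>t\<ge>0. (f has_real_derivative f' t) (at t within {0..})"
    and "\<alpha> > 0" and "eventually (\<lambda>t. A \<le> f t \<longrightarrow> f' t \<le> - \<alpha>) at_top"
  shows "eventually (\<lambda>t. f t \<le> A) at_top"
proof -
  obtain T0 where T0: "\<And>t. T0 \<le> t \<Longrightarrow> A \<le> f t \<Longrightarrow> f' t \<le> - \<alpha>"
    using assms(3) unfolding eventually_at_top_linorder by blast
  define T where "T = max T0 1"
  have "T > 0" and drift: "\<And>t. T \<le> t \<Longrightarrow> A \<le> f t \<Longrightarrow> f' t \<le> - \<alpha>"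
    using T0 by (simp_all add: T_def)
  obtain t0 where t0: "T \<le> t0" "f t0 \<le> A"
    using exists_le_of_drift[OF d \<open>\<alpha> > 0\<close> less_imp_le[OF \<open>T > 0\<close>] drift] by blast
  have "f t - A < 0" if "t0 < t" for t
  proof (rule neg_if_zeros_are_downcrossings[OF that])
    show "continuous_on {t0..t} (\<lambda>s. f s - A)"
      using continuous_on_nonneg_of_has_derivative[OF d] t0 \<open>T > 0\<close>
      by (intro continuous_intros) (auto elim: continuous_on_subset)
    fix y assume y: "t0 \<le> y" "y \<le> t" "f y - A = 0"
    then have "((\<lambda>s. f s - A) has_real_derivative f' y) (at y)"
      using d t0 \<open>T > 0\<close>
      by (auto intro!: derivative_eq_intros has_real_derivative_at_of_within_nonneg)
    moreover have "f' y < 0" using drift[of y] y t0 \<open>\<alpha> > 0\<close> by simp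
    ultimately show "\<exists>D<0. ((\<lambda>s. f s - A) has_real_derivative D) (at y)" by blast
  qed (use t0 in simp)
  then show ?thesis
    unfolding eventually_at_top_linorder using t0(2)
    by (metis diff_less_0_iff_less less_eq_real_def)
qed

lemma tendsto_of_eventually_near:
  fixes f :: "'a \<Rightarrow> real"
  assumes "0 < \<delta>0"
    and near: "\<And>\<delta>. 0 < \<delta> \<Longrightarrow> \<delta> < \<delta>0 \<Longrightarrow> eventually (\<lambda>t. s0 - \<delta> \<le> f t \<and> f t \<le> s0 + \<delta>) F"
  shows "(f \<longlongrightarrow> s0) F"
proof (rule tendstoI)
  fix e :: real assume "0 < e"
  define \<delta> where "\<delta> = min (e / 2) (\<delta>0 / 2)"
  have "0 < \<delta>" "\<delta> < \<delta>0" "\<delta> < e"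
    using \<open>0 < e\<close> \<open>0 < \<delta>0\<close> unfolding \<delta>_def by (auto simp: min_def)
  from near[OF this(1,2)] show "eventually (\<lambda>t. dist (f t) s0 < e) F"
    by eventually_elim (use \<open>\<delta> < e\<close> in \<open>auto simp: dist_real_def abs_if\<close>)
qed

section \<open>Uniqueness of mass-action solutions\<close>

lemma gronwall_zero:
  fixes d d' :: "real \<Rightarrow> real"
  assumes "T > 0" and cont: "continuous_on {0..T} d"
    and deriv: "\<And>t. 0 < t \<Longrightarrow> t < T \<Longrightarrow> (d has_real_derivative d' t) (at t)"
    and growth: "\<And>t. 0 < t \<Longrightarrow> t < T \<Longrightarrow> d' t \<le> K * d t"
    and "d 0 = 0" and nonneg: "\<And>t. 0 \<le> t \<Longrightarrow> t \<le> T \<Longrightarrow> d t \<ge> 0"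
  shows "d T = 0"
proof -
  define f where "f t = d t * exp (- K * t)" for t
  have "continuous_on {0..T} f" unfolding f_def by (intro continuous_intros cont)
  moreover have df: "(f has_real_derivative (d' t - K * d t) * exp (- K * t)) (at t)"
    if "0 < t" "t < T" for t
    unfolding f_def by (rule derivative_eq_intros deriv[OF that] refl | simp add: algebra_simps)+
  ultimately obtain l z where
    z: "0 < z" "z < T" "(f has_real_derivative l) (at z)" "f T - f 0 = (T - 0) * l"
    using MVT[OF \<open>T > 0\<close>] real_differentiable_def by meson
  have "l = (d' z - K * d z) * exp (- K * z)" using DERIV_unique[OF z(3) df[OF z(1,2)]] .
  also have "\<dots> \<le> 0" using growth[OF z(1,2)] by (intro mult_nonpos_nonneg) auto
  finally have "f T \<le> 0" using z(4) \<open>T > 0\<close> \<open>d 0 = 0\<close> by (simp add: f_def mult_nonneg_nonpos)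
  then have "d T \<le> 0" by (simp add: f_def mult_le_0_iff)
  with nonneg[of T] \<open>T > 0\<close> show ?thesis by simp
qed

lemma monom_lipschitz:
  assumes "finite S" and "B \<ge> 1" and bounded: "\<forall>i\<in>S. \<bar>a i\<bar> \<le> B \<and> \<bar>b i\<bar> \<le> B"
  shows "\<bar>monom S a v - monom S b v\<bar>
    \<le> B ^ (\<Sum>i\<in>S. v i) * (\<Sum>i\<in>S. v i) * (\<Sum>i\<in>S. \<bar>a i - b i\<bar>)"
proof -
  have scaled: "monom S c v = B ^ (\<Sum>i\<in>S. v i) * (\<Prod>i\<in>S. (c i / B) ^ v i)" for c
    using \<open>B \<ge> 1\<close> by (simp add: monom_def power_sum prod.distrib[symmetric] power_divide)
  have unit: "\<bar>(c i / B) ^ v i\<bar> \<le> 1" if "i \<in> S" "\<bar>c i\<bar> \<le> B" for c i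
    using that \<open>B \<ge> 1\<close> by (simp add: power_abs power_le_one)
  have "\<bar>(\<Prod>i\<in>S. (a i / B) ^ v i) - (\<Prod>i\<in>S. (b i / B) ^ v i)\<bar>
      \<le> (\<Sum>i\<in>S. \<bar>(a i / B) ^ v i - (b i / B) ^ v i\<bar>)"
    using norm_prod_diff[of S "\<lambda>i. (a i / B) ^ v i" "\<lambda>i. (b i / B) ^ v i"] unit bounded by auto
  also have "\<dots> \<le> (\<Sum>i\<in>S. (\<Sum>l\<in>S. v l) * \<bar>a i - b i\<bar>)"
  proof (rule sum_mono)
    fix i assume "i \<in> S"
    then have "\<bar>(a i / B) ^ v i - (b i / B) ^ v i\<bar> \<le> v i * \<bar>a i / B - b i / B\<bar>"
      using norm_power_diff[of "a i / B" "b i / B" "v i"] bounded \<open>B \<ge> 1\<close> by auto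
    also have "\<dots> \<le> (\<Sum>l\<in>S. v l) * \<bar>a i - b i\<bar>"
    proof (rule mult_mono)
      have "v i \<le> (\<Sum>l\<in>S. v l)"
        by (rule member_le_sum) (use \<open>finite S\<close> \<open>i \<in> S\<close> in auto)
      then show "real (v i) \<le> real (\<Sum>l\<in>S. v l)" by (rule of_nat_mono)
      show "\<bar>a i / B - b i / B\<bar> \<le> \<bar>a i - b i\<bar>"
        using \<open>B \<ge> 1\<close> by (simp add: diff_divide_distrib[symmetric] abs_divide divide_le_eq
            mult_le_cancel_left1)
    qed (auto intro: sum_nonneg)
    finally show "\<bar>(a i / B) ^ v i - (b i / B) ^ v i\<bar> \<le> (\<Sum>l\<in>S. v l) * \<bar>a i - b i\<bar>" .
  qed
  finally have "\<bar>(\<Prod>i\<in>S. (a i / B) ^ v i) - (\<Prod>i\<in>S. (b i / B) ^ v i)\<bar>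
      \<le> (\<Sum>l\<in>S. v l) * (\<Sum>i\<in>S. \<bar>a i - b i\<bar>)"
    by (simp add: sum_distrib_left)
  then show ?thesis
    unfolding scaled right_diff_distrib[symmetric] abs_mult mult.assoc using \<open>B \<ge> 1\<close>
    by (simp add: mult_left_mono)
qed

lemma mas_field_lipschitz:
  assumes "finite S" and "B \<ge> 1"
  shows "\<exists>L\<ge>0. \<forall>a b. (\<forall>i\<in>S. \<bar>a i\<bar> \<le> B \<and> \<bar>b i\<bar> \<le> B) \<longrightarrow>
    (\<forall>i\<in>S. \<bar>mas_field S R a i - mas_field S R b i\<bar> \<le> L * (\<Sum>l\<in>S. \<bar>a l - b l\<bar>))"
proof (induction R)
  case Nil
  then show ?case by (auto simp: mas_field_def)
next
  case (Cons r R)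
  obtain v v' k where r: "r = (v, v', k)" by (cases r)
  from Cons obtain L where "L \<ge> 0" and L: "\<And>a b i. \<forall>i\<in>S. \<bar>a i\<bar> \<le> B \<and> \<bar>b i\<bar> \<le> B \<Longrightarrow> i \<in> S \<Longrightarrow>
      \<bar>mas_field S R a i - mas_field S R b i\<bar> \<le> L * (\<Sum>l\<in>S. \<bar>a l - b l\<bar>)"
    by blast
  define C where "C = \<bar>k\<bar> * (\<Sum>i\<in>S. \<bar>real (v' i) - real (v i)\<bar>) *
    (B ^ (\<Sum>i\<in>S. v i) * (\<Sum>i\<in>S. v i))"
  have "C \<ge> 0" using \<open>B \<ge> 1\<close> by (simp add: C_def sum_nonneg mult_nonneg_nonneg)
  show ?case
  proof (intro exI[of _ "L + C"] conjI allI impI ballI)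
    fix a b i assume ab: "\<forall>i\<in>S. \<bar>a i\<bar> \<le> B \<and> \<bar>b i\<bar> \<le> B" and "i \<in> S"
    let ?s = "\<Sum>l\<in>S. \<bar>a l - b l\<bar>"
    define dv where "dv = real (v' i) - real (v i)"
    have step: "mas_field S (r # R) c i = k * dv * monom S c v + mas_field S R c i" for c
      by (simp add: mas_field_def r dv_def)
    have "\<bar>k * dv * monom S a v - k * dv * monom S b v\<bar> = \<bar>k\<bar> * \<bar>dv\<bar> * \<bar>monom S a v - monom S b v\<bar>"
      by (simp add: abs_mult flip: right_diff_distrib)
    also have "\<dots> \<le> \<bar>k\<bar> * (\<Sum>i\<in>S. \<bar>real (v' i) - real (v i)\<bar>) *
        (B ^ (\<Sum>i\<in>S. v i) * (\<Sum>i\<in>S. v i) * ?s)"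
    proof (intro mult_left_mono mult_mono)
      show "\<bar>dv\<bar> \<le> (\<Sum>i\<in>S. \<bar>real (v' i) - real (v i)\<bar>)"
        unfolding dv_def by (rule member_le_sum) (use \<open>finite S\<close> \<open>i \<in> S\<close> in auto)
      show "\<bar>monom S a v - monom S b v\<bar> \<le> B ^ (\<Sum>i\<in>S. v i) * (\<Sum>i\<in>S. v i) * ?s"
        using \<open>finite S\<close> \<open>B \<ge> 1\<close> ab by (rule monom_lipschitz)
    qed simp_all
    also have "\<dots> = C * ?s" by (simp add: C_def)
    finally have "\<bar>k * dv * monom S a v - k * dv * monom S b v\<bar> \<le> C * ?s" .
    then show "\<bar>mas_field S (r # R) a i - mas_field S (r # R) b i\<bar> \<le> (L + C) * ?s"
      using L[OF ab \<open>i \<in> S\<close>] unfolding step distrib_right by linarith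
  qed (use \<open>L \<ge> 0\<close> \<open>C \<ge> 0\<close> in simp)
qed

lemma sum_sq_derivative_bound:
  fixes e \<Delta> :: "'a \<Rightarrow> real"
  assumes "L \<ge> 0" and lip: "\<forall>l\<in>S. \<bar>\<Delta> l\<bar> \<le> L * (\<Sum>m\<in>S. \<bar>e m\<bar>)"
  shows "(\<Sum>l\<in>S. 2 * e l * \<Delta> l) \<le> 2 * L * card S * (\<Sum>l\<in>S. (e l)\<^sup>2)"
proof -
  have "(\<Sum>l\<in>S. 2 * e l * \<Delta> l) \<le> (\<Sum>l\<in>S. 2 * L * (\<Sum>m\<in>S. \<bar>e m\<bar>) * \<bar>e l\<bar>)"
  proof (rule sum_mono)
    fix l assume "l \<in> S"
    have "e l * \<Delta> l \<le> \<bar>e l\<bar> * \<bar>\<Delta> l\<bar>" by (metis abs_ge_self abs_mult)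
    also have "\<dots> \<le> \<bar>e l\<bar> * (L * (\<Sum>m\<in>S. \<bar>e m\<bar>))"
      using lip \<open>l \<in> S\<close> by (intro mult_left_mono) auto
    finally show "2 * e l * \<Delta> l \<le> 2 * L * (\<Sum>m\<in>S. \<bar>e m\<bar>) * \<bar>e l\<bar>" by (simp add: mult_ac)
  qed
  also have "\<dots> = 2 * L * (\<Sum>m\<in>S. \<bar>e m\<bar>)\<^sup>2"
    by (simp add: sum_distrib_left power2_eq_square mult_ac)
  also have "\<dots> \<le> 2 * L * ((\<Sum>l\<in>S. \<bar>e l\<bar>\<^sup>2) * card S)"
    using \<open>L \<ge> 0\<close> by (intro mult_left_mono sum_squared_le_sum_of_squares) auto
  finally show ?thesis by (simp add: mult_ac)
qed

lemma ode_sol_continuous: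
  assumes "ode_sol S F x" and "i \<in> S" and "A \<subseteq> {0..}"
  shows "continuous_on A (\<lambda>t. x t i)"
proof -
  have "continuous_on {0..} (\<lambda>t. x t i)"
    using assms(1,2) unfolding ode_sol_def
    by (intro continuous_on_nonneg_of_has_derivative[where f' = "\<lambda>t. F (x t) i"]) blast
  then show ?thesis using \<open>A \<subseteq> {0..}\<close> by (rule continuous_on_subset)
qed

lemma ode_sol_bounded:
  assumes "finite S" and "ode_sol S F x"
  shows "\<exists>B\<ge>1. \<forall>\<tau>\<in>{0..t}. \<forall>i\<in>S. \<bar>x \<tau> i\<bar> \<le> B"
proof -
  have "continuous_on {0..t} (\<lambda>\<tau>. \<Sum>i\<in>S. \<bar>x \<tau> i\<bar>)"
    by (intro continuous_intros ode_sol_continuous[OF assms(2)]) auto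
  then have "bounded ((\<lambda>\<tau>. \<Sum>i\<in>S. \<bar>x \<tau> i\<bar>) ` {0..t})"
    by (intro compact_imp_bounded compact_continuous_image) auto
  then obtain M where M: "\<And>\<tau>. \<tau> \<in> {0..t} \<Longrightarrow> (\<Sum>i\<in>S. \<bar>x \<tau> i\<bar>) \<le> M"
    unfolding bounded_real by fastforce
  have "\<bar>x \<tau> i\<bar> \<le> max 1 M" if "\<tau> \<in> {0..t}" "i \<in> S" for \<tau> i
    using member_le_sum[of i S "\<lambda>i. \<bar>x \<tau> i\<bar>"] M[OF that(1)] that(2) \<open>finite S\<close> by force
  then show ?thesis by (intro exI[of _ "max 1 M"]) auto
qed

lemma ode_sol_sq_dist_has_derivative:
  assumes x: "ode_sol S F x" and y: "ode_sol S F y" and "0 < \<tau>"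
  shows "((\<lambda>\<tau>. \<Sum>l\<in>S. (x \<tau> l - y \<tau> l)\<^sup>2) has_real_derivative
    (\<Sum>l\<in>S. 2 * (x \<tau> l - y \<tau> l) * (F (x \<tau>) l - F (y \<tau>) l))) (at \<tau>)"
proof (rule DERIV_sum)
  fix l assume "l \<in> S"
  have dx: "((\<lambda>\<tau>. x \<tau> l) has_real_derivative F (x \<tau>) l) (at \<tau>)"
    and dy: "((\<lambda>\<tau>. y \<tau> l) has_real_derivative F (y \<tau>) l) (at \<tau>)"
    using x y \<open>l \<in> S\<close> \<open>0 < \<tau>\<close> unfolding ode_sol_def
    by (auto intro: has_real_derivative_at_of_within_nonneg)
  show "((\<lambda>\<tau>. (x \<tau> l - y \<tau> l)\<^sup>2) has_real_derivative
      2 * (x \<tau> l - y \<tau> l) * (F (x \<tau>) l - F (y \<tau>) l)) (at \<tau>)"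
    using DERIV_power[OF DERIV_diff[OF dx dy], of 2] by (simp add: algebra_simps)
qed

lemma ode_sol_unique:
  assumes "finite S"
    and lip: "\<And>B. B \<ge> 1 \<Longrightarrow> \<exists>L\<ge>0. \<forall>a b. (\<forall>i\<in>S. \<bar>a i\<bar> \<le> B \<and> \<bar>b i\<bar> \<le> B) \<longrightarrow>
      (\<forall>i\<in>S. \<bar>F a i - F b i\<bar> \<le> L * (\<Sum>l\<in>S. \<bar>a l - b l\<bar>))"
    and x: "ode_sol S F x" and y: "ode_sol S F y" and init: "\<forall>i\<in>S. x 0 i = y 0 i"
    and "0 \<le> t" and "i \<in> S"
  shows "x t i = y t i"
proof (cases "t = 0")
  case True
  with init \<open>i \<in> S\<close> show ?thesis by simp
next
  case False
  with \<open>0 \<le> t\<close> have "0 < t" by simp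
  obtain Bx By where "Bx \<ge> 1" "\<forall>\<tau>\<in>{0..t}. \<forall>i\<in>S. \<bar>x \<tau> i\<bar> \<le> Bx"
    and "\<forall>\<tau>\<in>{0..t}. \<forall>i\<in>S. \<bar>y \<tau> i\<bar> \<le> By"
    using ode_sol_bounded[OF \<open>finite S\<close> x] ode_sol_bounded[OF \<open>finite S\<close> y] by meson
  then have bounded: "\<forall>i\<in>S. \<bar>x \<tau> i\<bar> \<le> max Bx By \<and> \<bar>y \<tau> i\<bar> \<le> max Bx By"
    if "\<tau> \<in> {0..t}" for \<tau>
    using that by (simp add: le_max_iff_disj)
  obtain L where "L \<ge> 0" and L: "\<And>\<tau>. \<tau> \<in> {0..t} \<Longrightarrow>
      \<forall>i\<in>S. \<bar>F (x \<tau>) i - F (y \<tau>) i\<bar> \<le> L * (\<Sum>l\<in>S. \<bar>x \<tau> l - y \<tau> l\<bar>)"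
    using lip[of "max Bx By"] \<open>Bx \<ge> 1\<close> bounded by (meson max.coboundedI1)
  define d where "d \<tau> = (\<Sum>l\<in>S. (x \<tau> l - y \<tau> l)\<^sup>2)" for \<tau>
  define d' where "d' \<tau> = (\<Sum>l\<in>S. 2 * (x \<tau> l - y \<tau> l) * (F (x \<tau>) l - F (y \<tau>) l))" for \<tau>
  have "d t = 0"
  proof (rule gronwall_zero[OF \<open>0 < t\<close>])
    show "continuous_on {0..t} d"
      unfolding d_def
      by (intro continuous_intros ode_sol_continuous[OF x] ode_sol_continuous[OF y]) auto
    show "(d has_real_derivative d' \<tau>) (at \<tau>)" if "0 < \<tau>" "\<tau> < t" for \<tau>
      unfolding d_def d'_def using x y \<open>0 < \<tau>\<close> by (rule ode_sol_sq_dist_has_derivative)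
    show "d' \<tau> \<le> (2 * L * card S) * d \<tau>" if "0 < \<tau>" "\<tau> < t" for \<tau>
      unfolding d_def d'_def using L[of \<tau>] that \<open>L \<ge> 0\<close> by (intro sum_sq_derivative_bound) auto
  qed (use init in \<open>auto simp: d_def intro: sum_nonneg\<close>)
  then show ?thesis
    using \<open>finite S\<close> \<open>i \<in> S\<close> by (simp add: d_def sum_nonneg_eq_0_iff)
qed

lemma mas_ode_sol_same_limits:
  assumes "finite S" and x: "ode_sol S (mas_field S R) x" and y: "ode_sol S (mas_field S R) y"
    and init: "\<forall>i\<in>S. x 0 i = y 0 i" and "A \<subseteq> S"
    and lim: "\<forall>i\<in>A. ((\<lambda>t. x t i) \<longlongrightarrow> a i) at_top"
  shows "\<forall>i\<in>A. ((\<lambda>t. y t i) \<longlongrightarrow> a i) at_top"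
proof
  fix i assume "i \<in> A"
  have "eventually (\<lambda>t. x t i = y t i) at_top"
    using eventually_ge_at_top[of 0]
  proof eventually_elim
    case (elim t)
    show ?case
      using ode_sol_unique[OF \<open>finite S\<close> mas_field_lipschitz[OF \<open>finite S\<close>] x y init elim]
        \<open>i \<in> A\<close> \<open>A \<subseteq> S\<close> by blast
  qed
  with lim \<open>i \<in> A\<close> show "((\<lambda>t. y t i) \<longlongrightarrow> a i) at_top"
    by (auto intro: Lim_transform_eventually)
qed

section \<open>Monomials and the function \<open>G\<close>\<close>

lemma monom_cong: "(\<And>i. i \<in> Y \<Longrightarrow> a i = b i) \<Longrightarrow> monom Y a v = monom Y b v"
  unfolding monom_def by (rule prod.cong) auto

lemma monom_split:
  assumes "finite S" and "Y \<subseteq> S"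
  shows "monom S z v = monom (S - Y) z v * monom Y z v"
proof -
  have "S = (S - Y) \<union> Y" using assms(2) by auto
  then show ?thesis
    unfolding monom_def using assms
    by (metis prod.union_disjoint finite_Diff finite_subset Diff_disjoint Int_commute)
qed

lemma monom_pos: "(\<And>i. i \<in> Y \<Longrightarrow> z i > 0) \<Longrightarrow> monom Y z v > 0"
  unfolding monom_def by (intro prod_pos) auto

lemma monom_nonneg: "(\<And>i. i \<in> Y \<Longrightarrow> z i \<ge> 0) \<Longrightarrow> monom Y z v \<ge> 0"
  unfolding monom_def by (intro prod_nonneg) auto

lemma monom_mono: "(\<And>i. i \<in> Y \<Longrightarrow> 0 \<le> r i \<and> r i \<le> z i) \<Longrightarrow> monom Y r v \<le> monom Y z v"
  unfolding monom_def by (intro prod_mono) (auto intro: power_mono)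

lemma monom_tendsto:
  assumes "\<And>i. i \<in> Y \<Longrightarrow> ((\<lambda>t. z t i) \<longlongrightarrow> a i) F"
  shows "((\<lambda>t. monom Y (z t) v) \<longlongrightarrow> monom Y a v) F"
  unfolding monom_def using assms by (intro tendsto_prod tendsto_power) auto

definition monom_pderiv :: "'s set \<Rightarrow> ('s \<Rightarrow> real) \<Rightarrow> 's complex \<Rightarrow> 's \<Rightarrow> real" where
  "monom_pderiv Y y v i = real (v i) * y i ^ (v i - 1) * (\<Prod>l\<in>Y - {i}. y l ^ v l)"

lemma monom_has_pderiv:
  assumes "finite Y" and "i \<in> Y"
  shows "((\<lambda>x. monom Y (y(i := x)) v) has_real_derivative monom_pderiv Y y v i) (at (y i))"
proof -
  have "monom Y (y(i := x)) v = x ^ v i * (\<Prod>l\<in>Y - {i}. (y(i := x)) l ^ v l)" for x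
    unfolding monom_def using assms by (simp add: prod.remove)
  also have "(\<Prod>l\<in>Y - {i}. (y(i := x)) l ^ v l) = (\<Prod>l\<in>Y - {i}. y l ^ v l)" for x
    by (rule prod.cong) auto
  moreover have "((\<lambda>x. x ^ v i * (\<Prod>l\<in>Y - {i}. y l ^ v l)) has_real_derivative
      monom_pderiv Y y v i) (at (y i))"
    unfolding monom_pderiv_def by (rule derivative_eq_intros refl | simp)+
  ultimately show ?thesis by simp
qed

lemma monom_line_has_derivative:
  assumes "finite Y"
  shows "((\<lambda>s. monom Y (\<lambda>i. a i + s * w i) v) has_real_derivative
    (\<Sum>i\<in>Y. w i * monom_pderiv Y (\<lambda>i. a i + s * w i) v i)) (at s)"
proof -
  have "((\<lambda>s. (a i + s * w i) ^ v i) has_real_derivative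
      of_nat (v i) * (w i * (a i + s * w i) ^ (v i - Suc 0))) (at s)" for i
    by (rule derivative_eq_intros refl | simp)+
  then have "((\<lambda>s. \<Prod>i\<in>Y. (a i + s * w i) ^ v i) has_real_derivative
      (\<Sum>i\<in>Y. of_nat (v i) * (w i * (a i + s * w i) ^ (v i - Suc 0)) *
        (\<Prod>l\<in>Y - {i}. (a l + s * w l) ^ v l))) (at s)"
    by (rule has_field_derivative_prod)
  then show ?thesis
    unfolding monom_def monom_pderiv_def by (simp add: mult_ac)
qed

text \<open>The factor of \<open>k\<^sub>j s\<^sup>v\<close> in \<open>G\<close> is the \<open>q\<close>-integer \<open>[m]\<^sub>u = (u\<^sup>m - 1) / (u - 1)\<close>,
  extended to negative \<open>m\<close>.\<close>
definition q_int :: "int \<Rightarrow> real \<Rightarrow> real" where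
  "q_int m u = (if 0 < m then (\<Sum>i\<in>{0..m - 1}. u powi i)
     else if m < 0 then - (\<Sum>i\<in>{m..-1}. u powi i) else 0)"

lemma G_fun_eq_sum:
  "G_fun Y R K m y u = (\<Sum>j<length R. K j * monom Y y (fst (R ! j)) * q_int (m j) u)"
proof -
  let ?f = "\<lambda>j. K j * monom Y y (fst (R ! j))"
  have "(\<Sum>j<length R. ?f j * q_int (m j) u)
      = (\<Sum>j<length R. (if 0 < m j then ?f j * (\<Sum>i\<in>{0..m j - 1}. u powi i) else 0)
          + (if m j < 0 then ?f j * (- (\<Sum>i\<in>{m j..-1}. u powi i)) else 0))"
    by (intro sum.cong) (auto simp: q_int_def)
  also have "\<dots> = G_fun Y R K m y u"
    unfolding G_fun_def sum.distrib sum.If_cases[OF finite_lessThan]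
    by (simp add: Collect_conj_eq lessThan_def Int_commute)
  finally show ?thesis by simp
qed

lemma q_int_one: "q_int m 1 = of_int m"
  by (simp add: q_int_def)

lemma q_int_mono:
  assumes "0 < u" and "u \<le> u'"
  shows "q_int m u \<le> q_int m u'"
proof -
  have "(\<Sum>i\<in>{0..m - 1}. u powi i) \<le> (\<Sum>i\<in>{0..m - 1}. u' powi i)"
    using assms by (intro sum_mono power_int_mono) auto
  moreover have "(\<Sum>i\<in>{m..-1}. u' powi i) \<le> (\<Sum>i\<in>{m..-1}. u powi i)"
    using assms by (intro sum_mono power_int_antimono) auto
  ultimately show ?thesis by (auto simp: q_int_def)
qed

lemma q_int_strict_mono_neg:
  assumes "0 < u" and "u < u'" and "m < 0"
  shows "q_int m u < q_int m u'"
proof -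
  have split: "(\<Sum>i\<in>{m..-1}. w powi i) = inverse w + (\<Sum>i\<in>{m..-1} - {-1}. w powi i)" for w :: real
    using \<open>m < 0\<close> by (subst sum.remove[of _ "-1"]) (auto simp: power_int_minus)
  have "(\<Sum>i\<in>{m..-1} - {-1}. u' powi i) \<le> (\<Sum>i\<in>{m..-1} - {-1}. u powi i)"
    using assms by (intro sum_mono power_int_antimono) auto
  moreover have "inverse u' < inverse u" using assms by (intro less_imp_inverse_less) auto
  ultimately show ?thesis using \<open>m < 0\<close> by (simp add: q_int_def split)
qed

lemma q_int_ge_pos:
  assumes "1 \<le> u" and "0 < m"
  shows "of_int m \<le> q_int m u"
proof -
  have "(\<Sum>i\<in>{0..m - 1}. (1::real)) \<le> (\<Sum>i\<in>{0..m - 1}. u powi i)"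
    using assms power_int_increasing[of 0 _ u] by (intro sum_mono) auto
  then show ?thesis using assms by (simp add: q_int_def)
qed

lemma q_int_ge_neg:
  assumes "1 \<le> u" and "m < 0"
  shows "of_int m / u \<le> q_int m u"
proof -
  have "(\<Sum>i\<in>{m..-1}. u powi i) \<le> (\<Sum>i\<in>{m..-1}. u powi (-1))"
    using assms by (intro sum_mono power_int_increasing) auto
  also have "\<dots> = - of_int m / u" using assms by (simp add: power_int_minus field_simps)
  finally show ?thesis using assms by (simp add: q_int_def)
qed

lemma sum_powi_neg_reindex:
  fixes u :: real
  assumes "u \<noteq> 0"
  shows "(\<Sum>i\<in>{-n..-1}. u powi i) = (\<Sum>i\<in>{0..n - 1}. inverse u powi i) / u"
proof -
  have "(\<Sum>i\<in>{0..n - 1}. inverse u powi i) = (\<Sum>i\<in>{-n..-1}. u powi i * u)"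
    by (rule sum.reindex_bij_witness[of _ "\<lambda>i. - i - 1" "\<lambda>i. - i - 1"])
       (use assms in \<open>auto simp: power_int_inverse power_int_diff power_int_minus\<close>)
  then show ?thesis using assms by (simp add: sum_distrib_right[symmetric])
qed

lemma q_int_uminus:
  assumes "0 < u"
  shows "q_int (- m) u = - q_int m (inverse u) / u"
proof (cases m "0 :: int" rule: linorder_cases)
  case less
  have "(\<Sum>i\<in>{m..-1}. inverse u powi i) = (\<Sum>i\<in>{0..- m - 1}. u powi i) * u"
    using sum_powi_neg_reindex[of "inverse u" "- m"] assms by (simp add: divide_inverse)
  then show ?thesis using less assms by (simp add: q_int_def)
next
  case greater
  then show ?thesis using sum_powi_neg_reindex[of u m] assms by (simp add: q_int_def)
qed (simp add: q_int_def)

lemma G_fun_one: "G_fun Y R K m y 1 = (\<Sum>j<length R. of_int (m j) * K j * monom Y y (fst (R ! j)))"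
  unfolding G_fun_eq_sum q_int_one by (simp add: mult_ac)

lemma G_fun_uminus:
  assumes "0 < u"
  shows "G_fun Y R K (\<lambda>j. - m j) y u = - G_fun Y R K m y (inverse u) / u"
  unfolding G_fun_eq_sum q_int_uminus[OF assms] by (simp add: sum_divide_distrib sum_negf)

lemma G_fun_mono:
  assumes "\<forall>j<length R. 0 \<le> K j" and "\<forall>i\<in>Y. 0 \<le> y i" and "0 < u" and "u \<le> u'"
  shows "G_fun Y R K m y u \<le> G_fun Y R K m y u'"
  unfolding G_fun_eq_sum using assms
  by (intro sum_mono mult_left_mono q_int_mono mult_nonneg_nonneg monom_nonneg) auto

lemma G_fun_strict_mono:
  assumes K: "\<forall>j<length R. 0 < K j" and y: "\<forall>i\<in>Y. 0 < y i"
    and "jm < length R" and "m jm < 0" and "0 < u" and "u < u'"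
  shows "G_fun Y R K m y u < G_fun Y R K m y u'"
  unfolding G_fun_eq_sum
proof (rule sum_strict_mono_ex1)
  have pos: "0 < K j * monom Y y (fst (R ! j))" if "j < length R" for j
    using K y that by (simp add: monom_pos)
  then show "\<forall>j\<in>{..<length R}. K j * monom Y y (fst (R ! j)) * q_int (m j) u
      \<le> K j * monom Y y (fst (R ! j)) * q_int (m j) u'"
    using \<open>0 < u\<close> \<open>u < u'\<close> by (intro ballI mult_left_mono q_int_mono) (auto simp: less_imp_le)
  have "K jm * monom Y y (fst (R ! jm)) * q_int (m jm) u
      < K jm * monom Y y (fst (R ! jm)) * q_int (m jm) u'"
    using pos[OF \<open>jm < length R\<close>] assms(4-) by (intro mult_strict_left_mono q_int_strict_mono_neg)
  then show "\<exists>j\<in>{..<length R}. K j * monom Y y (fst (R ! j)) * q_int (m j) u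
      < K j * monom Y y (fst (R ! j)) * q_int (m j) u'"
    using \<open>jm < length R\<close> by blast
qed simp

lemma G_fun_has_pderiv:
  assumes "finite Y" and "i \<in> Y"
  shows "((\<lambda>x. G_fun Y R K m (y(i := x)) u) has_real_derivative
    (\<Sum>j<length R. K j * monom_pderiv Y y (fst (R ! j)) i * q_int (m j) u)) (at (y i))"
  unfolding G_fun_eq_sum by (intro DERIV_sum DERIV_cmult_right DERIV_cmult monom_has_pderiv assms)

lemma omega_dG_eq_sum:
  assumes "finite Y"
  shows "omega_dG Y (G_fun Y R K m) \<omega> y u =
    (\<Sum>i\<in>Y. \<omega> $ i * (\<Sum>j<length R. K j * monom_pderiv Y y (fst (R ! j)) i * q_int (m j) u))"
  unfolding omega_dG_def
  by (intro sum.cong refl arg_cong2[where f = "(*)"] DERIV_imp_deriv G_fun_has_pderiv assms)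

lemma G_fun_line_has_derivative:
  assumes "finite Y"
  shows "((\<lambda>s. G_fun Y R K m (\<lambda>i. a i + s * \<omega> $ i) u) has_real_derivative
    omega_dG Y (G_fun Y R K m) \<omega> (\<lambda>i. a i + s * \<omega> $ i) u) (at s)"
proof -
  let ?y = "\<lambda>i. a i + s * \<omega> $ i"
  have "((\<lambda>s. G_fun Y R K m (\<lambda>i. a i + s * \<omega> $ i) u) has_real_derivative
      (\<Sum>j<length R. K j * (\<Sum>i\<in>Y. \<omega> $ i * monom_pderiv Y ?y (fst (R ! j)) i)
        * q_int (m j) u)) (at s)"
    unfolding G_fun_eq_sum
    by (intro DERIV_sum DERIV_cmult_right DERIV_cmult monom_line_has_derivative assms)
  also have "(\<Sum>j<length R. K j * (\<Sum>i\<in>Y. \<omega> $ i * monom_pderiv Y ?y (fst (R ! j)) i) * q_int (m j) u)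
      = omega_dG Y (G_fun Y R K m) \<omega> ?y u"
    unfolding omega_dG_eq_sum[OF assms]
    by (simp add: sum_distrib_left sum_distrib_right sum.swap[of _ Y] mult_ac)
  finally show ?thesis .
qed

lemma omega_dG_uminus:
  assumes "finite Y" and "0 < u"
  shows "omega_dG Y (G_fun Y R K (\<lambda>j. - m j)) (- \<omega>) y u
    = omega_dG Y (G_fun Y R K m) \<omega> y (inverse u) / u"
  unfolding omega_dG_eq_sum[OF assms(1)] q_int_uminus[OF assms(2)]
  by (simp add: sum_divide_distrib sum_distrib_left)

text \<open>The linearization \<open>m\<close> of \<open>[m]\<^sub>u\<close> for \<open>m > 0\<close> and \<open>m / u\<close> for \<open>m < 0\<close> bounds
  \<open>q_int\<close> from below, with a margin \<open>\<gamma>\<close> on the negative terms that absorbs relative rate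
  errors up to \<open>\<epsilon>\<close>.\<close>
lemma stoich_term_le_q_int:
  assumes "0 \<le> a" and "\<bar>b - a\<bar> \<le> \<epsilon> * a" and "1 \<le> u" and "0 \<le> \<epsilon>"
    and \<gamma>: "\<gamma> = (1 - \<epsilon>) - (1 + \<epsilon>) / u"
  shows "of_int m * b \<le> (1 + \<epsilon>) * (a * q_int m u) + (if m < 0 then \<gamma> * of_int m * a else 0)"
proof (cases "0 < m")
  case True
  have "of_int m * b \<le> of_int m * ((1 + \<epsilon>) * a)"
    using assms(2) True by (intro mult_left_mono) (auto simp: abs_le_iff algebra_simps)
  also have "\<dots> = (1 + \<epsilon>) * (a * of_int m)" by (simp add: mult_ac)
  also have "\<dots> \<le> (1 + \<epsilon>) * (a * q_int m u)"
    using q_int_ge_pos[OF \<open>1 \<le> u\<close> True] assms(1,4) by (intro mult_left_mono) auto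
  finally show ?thesis using True by simp
next
  case False
  show ?thesis
  proof (cases "m < 0")
    case True
    have "of_int m * b \<le> of_int m * ((1 - \<epsilon>) * a)"
      using assms(2) True by (intro mult_left_mono_neg) (auto simp: abs_le_iff algebra_simps)
    also have "\<dots> = (1 + \<epsilon>) * (a * (of_int m / u)) + \<gamma> * of_int m * a"
    proof -
      have eq: "1 - \<epsilon> = \<gamma> + (1 + \<epsilon>) / u" using \<gamma> by simp
      show ?thesis unfolding eq by (simp add: algebra_simps)
    qed
    also have "\<dots> \<le> (1 + \<epsilon>) * (a * q_int m u) + \<gamma> * of_int m * a"
      using q_int_ge_neg[OF \<open>1 \<le> u\<close> True] assms(1,4) by (intro add_right_mono mult_left_mono) auto
    finally show ?thesis using True by simp
  qed (use False in \<open>simp add: q_int_def\<close>)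
qed

lemma sum_stoich_le_of_q_int_nonpos:
  fixes a b :: "nat \<Rightarrow> real" and m :: "nat \<Rightarrow> int"
  assumes close: "\<forall>j<n. 0 \<le> a j \<and> \<bar>b j - a j\<bar> \<le> \<epsilon> * a j"
    and G: "(\<Sum>j<n. a j * q_int (m j) u) \<le> 0" and "1 \<le> u" and "0 \<le> \<epsilon>"
    and \<gamma>: "\<gamma> = (1 - \<epsilon>) - (1 + \<epsilon>) / u" "0 \<le> \<gamma>"
    and "jm < n" and "m jm < 0"
  shows "(\<Sum>j<n. of_int (m j) * b j) \<le> - \<gamma> * a jm"
proof -
  define c where "c j = (if m j < 0 then \<gamma> * of_int (m j) * a j else 0)" for j
  have c_nonpos: "c j \<le> 0" if "j \<in> {..<n}" for j
  proof -
    have "m j < 0 \<Longrightarrow> \<gamma> * of_int (m j) \<le> 0" using \<gamma>(2) by (simp add: mult_nonneg_nonpos)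
    then show ?thesis using close that unfolding c_def by (auto intro: mult_nonpos_nonneg)
  qed
  have "(\<Sum>j<n. of_int (m j) * b j) \<le> (\<Sum>j<n. (1 + \<epsilon>) * (a j * q_int (m j) u) + c j)"
    unfolding c_def using close \<open>1 \<le> u\<close> \<open>0 \<le> \<epsilon>\<close>
    by (intro sum_mono stoich_term_le_q_int[OF _ _ _ _ \<gamma>(1)]) auto
  also have "\<dots> = (1 + \<epsilon>) * (\<Sum>j<n. a j * q_int (m j) u) + (\<Sum>j<n. c j)"
    by (simp add: sum.distrib sum_distrib_left)
  also have "\<dots> \<le> c jm + (\<Sum>j\<in>{..<n} - {jm}. c j)"
    using G \<open>0 \<le> \<epsilon>\<close> \<open>jm < n\<close> by (simp add: sum.remove mult_nonneg_nonpos)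
  also have "\<dots> \<le> c jm" using sum_nonpos[of "{..<n} - {jm}" c] c_nonpos by auto
  also have "\<dots> \<le> - \<gamma> * a jm"
  proof -
    have "of_int (m jm) * (\<gamma> * a jm) \<le> (- 1) * (\<gamma> * a jm)"
      using \<open>m jm < 0\<close> \<gamma>(2) close \<open>jm < n\<close> by (intro mult_right_mono) auto
    then show ?thesis using \<open>m jm < 0\<close> by (simp add: c_def mult_ac)
  qed
  finally show ?thesis .
qed

lemma G_one_le_of_G_nonpos:
  assumes "\<forall>j<length R. 0 \<le> K j" and "\<forall>i\<in>Y. 0 \<le> y i"
    and close: "\<forall>j<length R. \<bar>k j - K j\<bar> \<le> \<epsilon> * K j"
    and "G_fun Y R K m y u \<le> 0" and "1 \<le> u" and "0 \<le> \<epsilon>"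
    and "\<gamma> = (1 - \<epsilon>) - (1 + \<epsilon>) / u" and "0 \<le> \<gamma>" and "jm < length R" and "m jm < 0"
  shows "G_fun Y R k m y 1 \<le> - \<gamma> * K jm * monom Y y (fst (R ! jm))"
proof -
  define M where "M j = monom Y y (fst (R ! j))" for j
  have "0 \<le> M j" for j using assms(2) by (simp add: M_def monom_nonneg)
  have "\<bar>k j * M j - K j * M j\<bar> \<le> \<epsilon> * (K j * M j)" if "j < length R" for j
  proof -
    have "\<bar>k j - K j\<bar> * M j \<le> (\<epsilon> * K j) * M j"
      using close that \<open>0 \<le> M j\<close> by (intro mult_right_mono) auto
    then show ?thesis using \<open>0 \<le> M j\<close> by (simp add: abs_mult mult.assoc flip: left_diff_distrib)
  qed
  with assms(1) \<open>\<And>j. 0 \<le> M j\<close>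
  have "\<forall>j<length R. 0 \<le> K j * M j \<and> \<bar>k j * M j - K j * M j\<bar> \<le> \<epsilon> * (K j * M j)" by simp
  then have "(\<Sum>j<length R. of_int (m j) * (k j * M j)) \<le> - \<gamma> * (K jm * M jm)"
    using assms(4-) by (intro sum_stoich_le_of_q_int_nonpos) (auto simp: G_fun_eq_sum M_def)
  then show ?thesis by (simp add: G_fun_one M_def mult_ac)
qed

lemma exists_rate_margin:
  assumes "1 < (u::real)"
  shows "\<exists>\<epsilon>>0. 0 < (1 - \<epsilon>) - (1 + \<epsilon>) / u"
proof (intro exI conjI)
  define \<epsilon> where "\<epsilon> = (u - 1) / (2 * (u + 1))"
  show "0 < \<epsilon>" using assms by (simp add: \<epsilon>_def)
  have "\<epsilon> * (u + 1) = (u - 1) / 2" using assms by (simp add: \<epsilon>_def divide_simps)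
  moreover have "((1 - \<epsilon>) - (1 + \<epsilon>) / u) * u = (u - 1) - \<epsilon> * (u + 1)"
    using assms by (simp add: field_simps)
  ultimately have "0 < ((1 - \<epsilon>) - (1 + \<epsilon>) / u) * u" using assms by simp
  then show "0 < (1 - \<epsilon>) - (1 + \<epsilon>) / u" using assms by (simp add: zero_less_mult_iff)
qed

section \<open>Output trajectories on a line\<close>

lemma frozen_rate_cong:
  assumes "\<And>i. i \<in> S - Y \<Longrightarrow> a i = b i"
  shows "frozen_rate S Y a r = frozen_rate S Y b r"
proof -
  have "monom (S - Y) a v = monom (S - Y) b v" for v by (rule monom_cong) (rule assms)
  then show ?thesis by (simp add: frozen_rate_def)
qed

lemma frozen_rate_pos:
  assumes "is_msCRC S R X" and "j < length R" and "\<And>i. i \<in> S - Y \<Longrightarrow> 0 < a i"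
  shows "0 < frozen_rate S Y a (R ! j)"
proof -
  have "0 < snd (snd (R ! j))"
    using assms(1) nth_mem[OF assms(2)] unfolding is_msCRC_def by fastforce
  with assms(3) show ?thesis unfolding frozen_rate_def by (intro mult_pos_pos monom_pos) auto
qed

lemma frozen_rate_tendsto:
  "(\<And>i. i \<in> S - Y \<Longrightarrow> ((\<lambda>t. z t i) \<longlongrightarrow> a i) F) \<Longrightarrow>
    ((\<lambda>t. frozen_rate S Y (z t) r) \<longlongrightarrow> frozen_rate S Y a r) F"
  unfolding frozen_rate_def by (intro tendsto_intros monom_tendsto)

lemma G_fun_cong:
  assumes "\<And>i. i \<in> Y \<Longrightarrow> y i = y' i"
  shows "G_fun Y R K m y u = G_fun Y R K m y' u"
proof -
  have "monom Y y v = monom Y y' v" for v by (rule monom_cong) (rule assms)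
  then show ?thesis by (simp add: G_fun_eq_sum)
qed

lemma G_fun_tendsto:
  "(\<And>i. i \<in> Y \<Longrightarrow> ((\<lambda>t. z t i) \<longlongrightarrow> y i) F) \<Longrightarrow>
    ((\<lambda>t. G_fun Y R K m (z t) u) \<longlongrightarrow> G_fun Y R K m y u) F"
  unfolding G_fun_eq_sum by (intro tendsto_intros monom_tendsto)

lemma mas_field_eq_G_one:
  fixes S Y :: "'s::finite set"
  assumes "Y \<subseteq> S" and "i \<in> Y"
    and stoich: "\<forall>j<length R. proj_rvec Y (R ! j) = of_int (m j) *\<^sub>R \<omega>"
  shows "mas_field S R z i = \<omega> $ i * G_fun Y R (\<lambda>j. frozen_rate S Y z (R ! j)) m z 1"
proof -
  have "real (fst (snd (R ! j)) i) - real (fst (R ! j) i) = of_int (m j) * \<omega> $ i"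
    if "j < length R" for j
    using arg_cong[OF stoich[rule_format, OF that], of "\<lambda>w. w $ i"] \<open>i \<in> Y\<close>
    by (simp add: proj_rvec_def)
  then show ?thesis
    unfolding mas_field_def sum_list_sum_nth G_fun_one frozen_rate_def sum_distrib_left
      monom_split[OF finite \<open>Y \<subseteq> S\<close>]
    by (intro sum.cong) (auto simp: split_def mult_ac lessThan_atLeast0)
qed

lemma ode_sol_on_line:
  fixes z :: "real \<Rightarrow> 's::finite \<Rightarrow> real"
  assumes sol: "ode_sol Y F z" and field: "\<And>y i. i \<in> Y \<Longrightarrow> F y i = \<omega> $ i * \<Phi> y"
    and "i0 \<in> Y" and "\<omega> $ i0 \<noteq> 0"
  obtains \<sigma> where "\<forall>t\<ge>0. \<forall>i\<in>Y. z t i = z 0 i + \<sigma> t * \<omega> $ i"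
    and "\<forall>t\<ge>0. (\<sigma> has_real_derivative \<Phi> (z t)) (at t within {0..})"
proof -
  define \<sigma> where "\<sigma> t = (z t i0 - z 0 i0) / \<omega> $ i0" for t
  have d: "((\<lambda>t. z t i) has_real_derivative \<omega> $ i * \<Phi> (z t)) (at t within {0..})"
    if "i \<in> Y" "t \<ge> 0" for i t
  proof -
    have "((\<lambda>t. z t i) has_real_derivative F (z t) i) (at t within {0..})"
      using sol that unfolding ode_sol_def by blast
    then show ?thesis using field[OF \<open>i \<in> Y\<close>] by simp
  qed
  have "\<forall>t\<ge>0. (\<sigma> has_real_derivative \<Phi> (z t)) (at t within {0..})"
  proof (intro allI impI)
    fix t :: real assume "t \<ge> 0"
    have "(\<sigma> has_real_derivative (\<omega> $ i0 * \<Phi> (z t) - 0) / \<omega> $ i0) (at t within {0..})"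
      unfolding \<sigma>_def[abs_def] by (intro DERIV_cdivide DERIV_diff d \<open>i0 \<in> Y\<close> \<open>t \<ge> 0\<close> DERIV_const)
    then show "(\<sigma> has_real_derivative \<Phi> (z t)) (at t within {0..})"
      using \<open>\<omega> $ i0 \<noteq> 0\<close> by simp
  qed
  moreover have "\<forall>t\<ge>0. \<forall>i\<in>Y. z t i = z 0 i + \<sigma> t * \<omega> $ i"
  proof (intro allI impI ballI)
    fix t :: real and i assume "t \<ge> 0" and "i \<in> Y"
    let ?e = "\<lambda>t. z t i - \<omega> $ i / \<omega> $ i0 * z t i0"
    have "(?e has_real_derivative 0) (at x within {0..})" if "x \<in> {0..}" for x
      using DERIV_diff[OF d[OF \<open>i \<in> Y\<close>] DERIV_cmult[OF d[OF \<open>i0 \<in> Y\<close>]], of x "\<omega> $ i / \<omega> $ i0"]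
        that \<open>\<omega> $ i0 \<noteq> 0\<close> by simp
    from has_field_derivative_zero_constant[OF convex_real_interval(1) this]
    obtain c where "\<forall>x\<in>{0..}. ?e x = c" by blast
    then have "?e t = ?e 0" using \<open>t \<ge> 0\<close> by simp
    then show "z t i = z 0 i + \<sigma> t * \<omega> $ i"
      using \<open>\<omega> $ i0 \<noteq> 0\<close> by (simp add: \<sigma>_def field_simps)
  qed
  ultimately show ?thesis using that by blast
qed

lemma mas_ode_sol_on_line:
  fixes S Y :: "'s::finite set"
  assumes sol: "ode_sol Y (mas_field S R) z" and "Y \<subseteq> S"
    and stoich: "\<forall>j<length R. proj_rvec Y (R ! j) = of_int (m j) *\<^sub>R \<omega>"
    and "i0 \<in> Y" and "\<omega> $ i0 \<noteq> 0" and init: "\<forall>i\<in>Y. z 0 i = y0 i"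
  obtains \<sigma> where "\<forall>t\<ge>0. \<forall>i\<in>Y. z t i = y0 i + \<sigma> t * \<omega> $ i"
    and "\<forall>t\<ge>0. (\<sigma> has_real_derivative G_fun Y R (\<lambda>j. frozen_rate S Y (z t) (R ! j)) m
      (\<lambda>i. y0 i + \<sigma> t * \<omega> $ i) 1) (at t within {0..})"
proof -
  obtain \<sigma> where line: "\<forall>t\<ge>0. \<forall>i\<in>Y. z t i = z 0 i + \<sigma> t * \<omega> $ i"
    and d\<sigma>: "\<forall>t\<ge>0. (\<sigma> has_real_derivative
      G_fun Y R (\<lambda>j. frozen_rate S Y (z t) (R ! j)) m (z t) 1) (at t within {0..})"
    using ode_sol_on_line[OF sol mas_field_eq_G_one[OF \<open>Y \<subseteq> S\<close> _ stoich] \<open>i0 \<in> Y\<close>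
      \<open>\<omega> $ i0 \<noteq> 0\<close>] by blast
  have on_line: "z t i = y0 i + \<sigma> t * \<omega> $ i" if "t \<ge> 0" "i \<in> Y" for t i
    using line[rule_format, OF that] init that(2) by simp
  then have "G_fun Y R (\<lambda>j. frozen_rate S Y (z t) (R ! j)) m (z t) 1
      = G_fun Y R (\<lambda>j. frozen_rate S Y (z t) (R ! j)) m (\<lambda>i. y0 i + \<sigma> t * \<omega> $ i) 1"
    if "t \<ge> 0" for t
    using that by (intro G_fun_cong) auto
  with d\<sigma> on_line show ?thesis by (intro that) auto
qed

lemma tendsto_on_line:
  fixes z :: "real \<Rightarrow> 's::finite \<Rightarrow> real"
  assumes line: "\<And>t i. t \<ge> 0 \<Longrightarrow> i \<in> Y \<Longrightarrow> z t i = y0 i + \<sigma> t * \<omega> $ i"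
    and "i0 \<in> Y" and "\<omega> $ i0 \<noteq> 0" and lim: "\<forall>i\<in>Y. ((\<lambda>t. z t i) \<longlongrightarrow> ybar i) at_top"
  obtains s where "(\<sigma> \<longlongrightarrow> s) at_top" and "\<forall>i\<in>Y. ybar i = y0 i + s * \<omega> $ i"
proof -
  define s where "s = (ybar i0 - y0 i0) / \<omega> $ i0"
  have "\<forall>\<^sub>F t in at_top. (z t i0 - y0 i0) / \<omega> $ i0 = \<sigma> t"
    using eventually_ge_at_top[of 0]
  proof eventually_elim
    case (elim t)
    show ?case using line[OF elim \<open>i0 \<in> Y\<close>] \<open>\<omega> $ i0 \<noteq> 0\<close> by simp
  qed
  moreover have "((\<lambda>t. (z t i0 - y0 i0) / \<omega> $ i0) \<longlongrightarrow> s) at_top"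
    unfolding s_def using lim \<open>i0 \<in> Y\<close> \<open>\<omega> $ i0 \<noteq> 0\<close> by (intro tendsto_intros) auto
  ultimately have \<sigma>_lim: "(\<sigma> \<longlongrightarrow> s) at_top" by (rule Lim_transform_eventually[rotated])
  have "ybar i = y0 i + s * \<omega> $ i" if "i \<in> Y" for i
  proof -
    have "\<forall>\<^sub>F t in at_top. y0 i + \<sigma> t * \<omega> $ i = z t i"
      using eventually_ge_at_top[of 0] by eventually_elim (rule line[OF _ \<open>i \<in> Y\<close>, symmetric])
    moreover have "((\<lambda>t. y0 i + \<sigma> t * \<omega> $ i) \<longlongrightarrow> y0 i + s * \<omega> $ i) at_top"
      by (intro tendsto_intros \<sigma>_lim)
    ultimately have "((\<lambda>t. z t i) \<longlongrightarrow> y0 i + s * \<omega> $ i) at_top"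
      by (rule Lim_transform_eventually[rotated])
    with lim \<open>i \<in> Y\<close> show ?thesis
      using tendsto_unique[OF trivial_limit_at_top_linorder] by blast
  qed
  with \<sigma>_lim that show ?thesis by blast
qed

text \<open>The scalar coordinate of the frozen trajectory converges and its derivative is
  \<open>G(y, 1)\<close> along the trajectory, so \<open>G(y, 1)\<close> vanishes in the limit.\<close>
lemma frozen_limit_on_line:
  fixes S Y :: "'s::finite set"
  assumes sol: "ode_sol Y (mas_field S R) z" and "Y \<subseteq> S"
    and stoich: "\<forall>j<length R. proj_rvec Y (R ! j) = of_int (m j) *\<^sub>R \<omega>"
    and "i0 \<in> Y" and "\<omega> $ i0 \<noteq> 0" and init: "\<forall>i\<in>Y. z 0 i = y0 i"
    and frozen: "\<forall>t\<ge>0. \<forall>i\<in>S - Y. z t i = xbar i"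
    and lim: "\<forall>i\<in>Y. ((\<lambda>t. z t i) \<longlongrightarrow> ybar i) at_top"
  obtains s where "\<forall>i\<in>Y. ybar i = y0 i + s * \<omega> $ i"
    and "G_fun Y R (\<lambda>j. frozen_rate S Y xbar (R ! j)) m (\<lambda>i. y0 i + s * \<omega> $ i) 1 = 0"
proof -
  obtain \<sigma> where line: "\<forall>t\<ge>0. \<forall>i\<in>Y. z t i = y0 i + \<sigma> t * \<omega> $ i"
    and d\<sigma>: "\<forall>t\<ge>0. (\<sigma> has_real_derivative G_fun Y R (\<lambda>j. frozen_rate S Y (z t) (R ! j)) m
      (\<lambda>i. y0 i + \<sigma> t * \<omega> $ i) 1) (at t within {0..})"
    using mas_ode_sol_on_line[OF sol \<open>Y \<subseteq> S\<close> stoich \<open>i0 \<in> Y\<close> \<open>\<omega> $ i0 \<noteq> 0\<close> init] by blast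
  obtain s where \<sigma>_lim: "(\<sigma> \<longlongrightarrow> s) at_top" and ybar_line: "\<forall>i\<in>Y. ybar i = y0 i + s * \<omega> $ i"
    using tendsto_on_line[OF line[rule_format] \<open>i0 \<in> Y\<close> \<open>\<omega> $ i0 \<noteq> 0\<close> lim] by blast
  let ?G = "G_fun Y R (\<lambda>j. frozen_rate S Y xbar (R ! j)) m"
  have "frozen_rate S Y (z t) r = frozen_rate S Y xbar r" if "t \<ge> 0" for t r
    using frozen that by (intro frozen_rate_cong) auto
  then have "\<forall>t\<ge>0. (\<sigma> has_real_derivative ?G (\<lambda>i. y0 i + \<sigma> t * \<omega> $ i) 1) (at t within {0..})"
    using d\<sigma> by simp
  moreover have "((\<lambda>t. ?G (\<lambda>i. y0 i + \<sigma> t * \<omega> $ i) 1) \<longlongrightarrow> ?G (\<lambda>i. y0 i + s * \<omega> $ i) 1) at_top"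
    by (intro G_fun_tendsto tendsto_intros \<sigma>_lim)
  ultimately have "?G (\<lambda>i. y0 i + s * \<omega> $ i) 1 = 0" by (rule derivative_limit_zero[OF _ \<sigma>_lim])
  with ybar_line that show ?thesis by blast
qed

lemma eventually_ge_of_Liminf_pos:
  fixes z :: "real \<Rightarrow> 's \<Rightarrow> real"
  assumes "finite Y" and "\<forall>i\<in>Y. 0 < Liminf at_top (\<lambda>t. ereal (z t i))"
  obtains r where "\<forall>i\<in>Y. 0 < r i" and "eventually (\<lambda>t. \<forall>i\<in>Y. r i \<le> z t i) at_top"
proof -
  have "\<exists>r. 0 < r \<and> eventually (\<lambda>t. r \<le> z t i) at_top" if "i \<in> Y" for i
  proof -
    obtain r where "0 < ereal r" "ereal r < Liminf at_top (\<lambda>t. ereal (z t i))"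
      using assms(2) \<open>i \<in> Y\<close> ereal_dense2 by blast
    then have "eventually (\<lambda>t. ereal r < ereal (z t i)) at_top" by (intro less_LiminfD)
    then have "eventually (\<lambda>t. r \<le> z t i) at_top" by eventually_elim simp
    with \<open>0 < ereal r\<close> show ?thesis by auto
  qed
  then obtain r where r: "\<forall>i\<in>Y. 0 < r i \<and> eventually (\<lambda>t. r i \<le> z t i) at_top"
    by metis
  have "eventually (\<lambda>t. \<forall>i\<in>Y. r i \<le> z t i) at_top"
    using r \<open>finite Y\<close> by (intro eventually_ball_finite) auto
  with r that show ?thesis by blast
qed

lemma eventually_rates_close:
  fixes k :: "'a \<Rightarrow> nat \<Rightarrow> real"
  assumes "\<forall>j<n. ((\<lambda>t. k t j) \<longlongrightarrow> K j) F" and "\<forall>j<n. 0 < K j" and "0 < \<epsilon>"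
  shows "eventually (\<lambda>t. \<forall>j<n. \<bar>k t j - K j\<bar> \<le> \<epsilon> * K j) F"
proof -
  have "eventually (\<lambda>t. \<bar>k t j - K j\<bar> \<le> \<epsilon> * K j) F" if "j < n" for j
    using tendstoD[OF assms(1)[rule_format, OF that], of "\<epsilon> * K j"] assms(2,3) that
    by (auto simp: dist_real_def elim!: eventually_mono)
  then have "eventually (\<lambda>t. \<forall>j\<in>{..<n}. \<bar>k t j - K j\<bar> \<le> \<epsilon> * K j) F"
    by (intro eventually_ball_finite) auto
  then show ?thesis by (rule eventually_mono) auto
qed

section \<open>The one-dimensional reduced system\<close>

text \<open>The reduced system of \<open>C\<^sup>2\<close> with its inputs frozen at \<open>ybar\<^sup>1\<close> (rate constants \<open>K\<close>), the data
  \<open>\<omega>, m, ut\<close> of condition (2), and the line through \<open>y0\<close> in direction \<open>\<omega>\<close> that carries the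
  equilibrium at parameter \<open>s0\<close>.\<close>
locale one_dim_reduced =
  fixes Y :: "'s::finite set" and R :: "'s rxn list" and K :: "nat \<Rightarrow> real" and m :: "nat \<Rightarrow> int"
    and \<omega> :: "real^'s" and y0 :: "'s \<Rightarrow> real" and ut :: "('s \<Rightarrow> real) \<Rightarrow> real" and s0 :: real
  assumes R_nonempty: "R \<noteq> []"
    and K_pos: "\<forall>j<length R. 0 < K j"
    and m_nonzero: "\<forall>j<length R. m j \<noteq> 0"
    and root: "\<And>y. \<forall>i\<in>Y. 0 < y i \<Longrightarrow> 0 < ut y \<and> G_fun Y R K m y (ut y) = 0"
    and transversal: "\<And>y. \<forall>i\<in>Y. 0 < y i \<Longrightarrow> omega_dG Y (G_fun Y R K m) \<omega> y (ut y) < 0"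
    and equilibrium_pos: "\<forall>i\<in>Y. 0 < y0 i + s0 * \<omega> $ i"
    and equilibrium: "G_fun Y R K m (\<lambda>i. y0 i + s0 * \<omega> $ i) 1 = 0"
begin

abbreviation line :: "real \<Rightarrow> 's \<Rightarrow> real" where
  "line s \<equiv> \<lambda>i. y0 i + s * \<omega> $ i"

lemma exists_neg_stoich: "\<exists>j<length R. m j < 0"
proof (rule ccontr)
  assume "\<not> ?thesis"
  with m_nonzero have "\<forall>j<length R. 0 < m j" by (meson linorder_neqE)
  then have "0 < G_fun Y R K m (line s0) 1"
    unfolding G_fun_one using K_pos equilibrium_pos R_nonempty
    by (intro sum_pos) (auto intro!: mult_pos_pos monom_pos)
  with equilibrium show False by simp
qed

lemma G_strict_mono:
  assumes "\<forall>i\<in>Y. 0 < y i" and "0 < u" and "u < u'"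
  shows "G_fun Y R K m y u < G_fun Y R K m y u'"
  using exists_neg_stoich G_fun_strict_mono[OF K_pos assms(1) _ _ assms(2,3)] by blast

lemma root_unique:
  assumes "\<forall>i\<in>Y. 0 < y i" and "0 < u" and "G_fun Y R K m y u = 0"
  shows "u = ut y"
  using G_strict_mono[OF assms(1) assms(2), of "ut y"] G_strict_mono[OF assms(1), of "ut y" u]
    root[OF assms(1)] assms(2,3) by (cases u "ut y" rule: linorder_cases) auto

lemma line_pos_between:
  assumes "a \<le> s" and "s \<le> b" and "\<forall>i\<in>Y. 0 < line a i" and "\<forall>i\<in>Y. 0 < line b i"
  shows "\<forall>i\<in>Y. 0 < line s i"
proof
  fix i assume "i \<in> Y"
  show "0 < line s i"
  proof (cases "0 \<le> \<omega> $ i")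
    case True
    then have "line a i \<le> line s i" using \<open>a \<le> s\<close> by (simp add: mult_right_mono)
    with assms(3) \<open>i \<in> Y\<close> show ?thesis by fastforce
  next
    case False
    then have "line b i \<le> line s i" using \<open>s \<le> b\<close> by (simp add: mult_right_mono_neg)
    with assms(4) \<open>i \<in> Y\<close> show ?thesis by fastforce
  qed
qed

text \<open>Transversality makes every zero of \<open>s \<mapsto> G(line s, u)\<close> a strict down-crossing.\<close>
lemma G_line_neg_after_root:
  assumes "a < s" and pos_a: "\<forall>i\<in>Y. 0 < line a i" and pos_s: "\<forall>i\<in>Y. 0 < line s i"
    and "0 < u" and "G_fun Y R K m (line a) u = 0"
  shows "G_fun Y R K m (line s) u < 0"
proof (rule neg_if_zeros_are_downcrossings[OF \<open>a < s\<close>])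
  have deriv: "((\<lambda>x. G_fun Y R K m (line x) u) has_real_derivative
      omega_dG Y (G_fun Y R K m) \<omega> (line x) u) (at x)" for x
    by (rule G_fun_line_has_derivative) simp
  then show "continuous_on {a..s} (\<lambda>x. G_fun Y R K m (line x) u)"
    by (intro continuous_at_imp_continuous_on ballI DERIV_isCont)
  fix x assume "a \<le> x" "x \<le> s" "G_fun Y R K m (line x) u = 0"
  moreover have pos: "\<forall>i\<in>Y. 0 < line x i"
    using line_pos_between[OF \<open>a \<le> x\<close> \<open>x \<le> s\<close> pos_a pos_s] .
  ultimately have "u = ut (line x)" using \<open>0 < u\<close> by (intro root_unique) auto
  with deriv transversal[OF pos]
  show "\<exists>D<0. ((\<lambda>x. G_fun Y R K m (line x) u) has_real_derivative D) (at x)" by auto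
qed (use assms in simp)

lemma root_gt_one_above:
  assumes "s0 < A" and "\<forall>i\<in>Y. 0 < line A i"
  shows "1 < ut (line A)"
proof (rule ccontr)
  assume "\<not> 1 < ut (line A)"
  then have "G_fun Y R K m (line A) (ut (line A)) \<le> G_fun Y R K m (line A) 1"
    using root[OF assms(2)] assms(2) K_pos by (intro G_fun_mono) auto
  moreover have "G_fun Y R K m (line A) 1 < 0"
    using G_line_neg_after_root[OF assms(1) equilibrium_pos assms(2) _ equilibrium] by simp
  ultimately show False using root[OF assms(2)] by simp
qed

lemma G_nonpos_above:
  assumes "A \<le> s" and "\<forall>i\<in>Y. 0 < line A i" and "\<forall>i\<in>Y. 0 < line s i"
  shows "G_fun Y R K m (line s) (ut (line A)) \<le> 0"
  using G_line_neg_after_root[OF _ assms(2,3)] root[OF assms(2)] \<open>A \<le> s\<close>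
  by (cases "A = s") (auto simp: less_le_not_le)

lemma line_pos_near_equilibrium:
  obtains \<delta>0 where "0 < \<delta>0" and "\<And>s. \<bar>s - s0\<bar> < \<delta>0 \<Longrightarrow> \<forall>i\<in>Y. 0 < line s i"
proof -
  have "{s. \<forall>i\<in>Y. 0 < line s i} = (\<Inter>i\<in>Y. {s. 0 < y0 i + s * \<omega> $ i})" by auto
  moreover have "open {s. 0 < y0 i + s * \<omega> $ i}" for i
    by (intro open_Collect_less continuous_intros)
  ultimately have "open {s. \<forall>i\<in>Y. 0 < line s i}" by (auto intro: open_INT)
  moreover have "s0 \<in> {s. \<forall>i\<in>Y. 0 < line s i}" using equilibrium_pos by simp
  ultimately obtain e where "0 < e" and "\<forall>s. \<bar>s - s0\<bar> < e \<longrightarrow> s \<in> {s. \<forall>i\<in>Y. 0 < line s i}"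
    unfolding open_real by blast
  then show ?thesis by (intro that[of e]) auto
qed

lemma drift_neg_above:
  assumes "s0 < A" and "\<forall>i\<in>Y. 0 < line A i" and r: "\<forall>i\<in>Y. 0 < r i"
  obtains \<epsilon> \<alpha> where "0 < \<epsilon>" and "0 < \<alpha>"
    and "\<And>s k. A \<le> s \<Longrightarrow> \<forall>i\<in>Y. r i \<le> line s i \<Longrightarrow> \<forall>j<length R. \<bar>k j - K j\<bar> \<le> \<epsilon> * K j \<Longrightarrow>
      G_fun Y R k m (line s) 1 \<le> - \<alpha>"
proof -
  define u where "u = ut (line A)"
  have "1 < u" unfolding u_def using assms(1,2) by (rule root_gt_one_above)
  then obtain \<epsilon> where "0 < \<epsilon>" and margin: "0 < (1 - \<epsilon>) - (1 + \<epsilon>) / u"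
    using exists_rate_margin by blast
  define \<gamma> where "\<gamma> = (1 - \<epsilon>) - (1 + \<epsilon>) / u"
  have "0 < \<gamma>" using margin by (simp add: \<gamma>_def)
  obtain jm where jm: "jm < length R" "m jm < 0" using exists_neg_stoich by blast
  define \<alpha> where "\<alpha> = \<gamma> * K jm * monom Y r (fst (R ! jm))"
  have "0 < \<alpha>" using \<open>0 < \<gamma>\<close> K_pos jm r by (simp add: \<alpha>_def monom_pos)
  show ?thesis
  proof (rule that[OF \<open>0 < \<epsilon>\<close> \<open>0 < \<alpha>\<close>])
    fix s k assume "A \<le> s" and r_le: "\<forall>i\<in>Y. r i \<le> line s i"
      and close: "\<forall>j<length R. \<bar>k j - K j\<bar> \<le> \<epsilon> * K j"
    have pos: "\<forall>i\<in>Y. 0 < line s i" using r r_le by (auto intro: less_le_trans)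
    have "G_fun Y R k m (line s) 1 \<le> - \<gamma> * K jm * monom Y (line s) (fst (R ! jm))"
      using G_nonpos_above[OF \<open>A \<le> s\<close> assms(2) pos] K_pos pos close \<open>1 < u\<close> \<open>0 < \<epsilon>\<close> \<open>0 < \<gamma>\<close> jm
      by (intro G_one_le_of_G_nonpos[OF _ _ _ _ _ _ \<gamma>_def]) (auto simp: u_def less_imp_le)
    also have "\<dots> \<le> - \<alpha>"
      using monom_mono[of Y r "line s" "fst (R ! jm)"] r r_le \<open>0 < \<gamma>\<close> K_pos jm
      by (simp add: \<alpha>_def less_imp_le)
    finally show "G_fun Y R k m (line s) 1 \<le> - \<alpha>" .
  qed
qed

lemma eventually_le_above_equilibrium:
  fixes k :: "real \<Rightarrow> nat \<Rightarrow> real"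
  assumes \<sigma>: "\<forall>t\<ge>0. (\<sigma> has_real_derivative G_fun Y R (k t) m (line (\<sigma> t)) 1) (at t within {0..})"
    and rates: "\<forall>j<length R. ((\<lambda>t. k t j) \<longlongrightarrow> K j) at_top"
    and r: "\<forall>i\<in>Y. 0 < r i" and persistent: "eventually (\<lambda>t. \<forall>i\<in>Y. r i \<le> line (\<sigma> t) i) at_top"
    and "s0 < A" and "\<forall>i\<in>Y. 0 < line A i"
  shows "eventually (\<lambda>t. \<sigma> t \<le> A) at_top"
proof -
  obtain \<epsilon> \<alpha> where "0 < \<epsilon>" and "0 < \<alpha>" and drift: "\<And>s k. A \<le> s \<Longrightarrow> \<forall>i\<in>Y. r i \<le> line s i \<Longrightarrow>
      \<forall>j<length R. \<bar>k j - K j\<bar> \<le> \<epsilon> * K j \<Longrightarrow> G_fun Y R k m (line s) 1 \<le> - \<alpha>"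
    using drift_neg_above[OF \<open>s0 < A\<close> \<open>\<forall>i\<in>Y. 0 < line A i\<close> r] by blast
  have "eventually (\<lambda>t. A \<le> \<sigma> t \<longrightarrow> G_fun Y R (k t) m (line (\<sigma> t)) 1 \<le> - \<alpha>) at_top"
    using persistent eventually_rates_close[OF rates K_pos \<open>0 < \<epsilon>\<close>]
    by eventually_elim (blast intro: drift)
  with \<sigma> \<open>0 < \<alpha>\<close> show ?thesis by (rule eventually_le_of_drift)
qed

end

text \<open>Replacing \<open>\<omega>, m, u\<close> by \<open>-\<omega>, -m, 1/u\<close> leaves both the dynamics and condition (2) invariant
  and reverses the direction of the line.\<close>
lemma (in one_dim_reduced) mirror:
  "one_dim_reduced Y R K (\<lambda>j. - m j) (- \<omega>) y0 (\<lambda>y. inverse (ut y)) (- s0)"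
proof
  fix y :: "'s \<Rightarrow> real" assume pos: "\<forall>i\<in>Y. 0 < y i"
  show "0 < inverse (ut y) \<and> G_fun Y R K (\<lambda>j. - m j) y (inverse (ut y)) = 0"
    using root[OF pos] by (simp add: G_fun_uminus)
  show "omega_dG Y (G_fun Y R K (\<lambda>j. - m j)) (- \<omega>) y (inverse (ut y)) < 0"
    using root[OF pos] transversal[OF pos]
    by (simp add: omega_dG_uminus divide_inverse mult_neg_pos)
qed (use R_nonempty K_pos m_nonzero equilibrium_pos equilibrium in \<open>simp_all add: G_fun_uminus\<close>)

context one_dim_reduced
begin

lemma eventually_ge_below_equilibrium:
  fixes k :: "real \<Rightarrow> nat \<Rightarrow> real"
  assumes \<sigma>: "\<forall>t\<ge>0. (\<sigma> has_real_derivative G_fun Y R (k t) m (line (\<sigma> t)) 1) (at t within {0..})"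
    and rates: "\<forall>j<length R. ((\<lambda>t. k t j) \<longlongrightarrow> K j) at_top"
    and r: "\<forall>i\<in>Y. 0 < r i" and persistent: "eventually (\<lambda>t. \<forall>i\<in>Y. r i \<le> line (\<sigma> t) i) at_top"
    and "B < s0" and "\<forall>i\<in>Y. 0 < line B i"
  shows "eventually (\<lambda>t. B \<le> \<sigma> t) at_top"
proof -
  interpret mirrored: one_dim_reduced Y R K "\<lambda>j. - m j" "- \<omega>" y0 "\<lambda>y. inverse (ut y)" "- s0"
    by (rule mirror)
  have "eventually (\<lambda>t. - \<sigma> t \<le> - B) at_top"
  proof (rule mirrored.eventually_le_above_equilibrium[OF _ rates r])
    show "\<forall>t\<ge>0. ((\<lambda>t. - \<sigma> t) has_real_derivative
        G_fun Y R (k t) (\<lambda>j. - m j) (\<lambda>i. y0 i + - \<sigma> t * (- \<omega>) $ i) 1) (at t within {0..})"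
      using \<sigma> by (simp add: G_fun_uminus DERIV_minus)
  qed (use persistent assms(5,6) in simp_all)
  then show ?thesis by (rule eventually_mono) simp
qed

lemma tendsto_equilibrium:
  fixes k :: "real \<Rightarrow> nat \<Rightarrow> real"
  assumes \<sigma>: "\<forall>t\<ge>0. (\<sigma> has_real_derivative G_fun Y R (k t) m (line (\<sigma> t)) 1) (at t within {0..})"
    and rates: "\<forall>j<length R. ((\<lambda>t. k t j) \<longlongrightarrow> K j) at_top"
    and r: "\<forall>i\<in>Y. 0 < r i" and persistent: "eventually (\<lambda>t. \<forall>i\<in>Y. r i \<le> line (\<sigma> t) i) at_top"
  shows "(\<sigma> \<longlongrightarrow> s0) at_top"
proof -
  obtain \<delta>0 where "0 < \<delta>0" and near: "\<And>s. \<bar>s - s0\<bar> < \<delta>0 \<Longrightarrow> \<forall>i\<in>Y. 0 < line s i"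
    using line_pos_near_equilibrium by blast
  show ?thesis
  proof (rule tendsto_of_eventually_near[OF \<open>0 < \<delta>0\<close>])
    fix \<delta> :: real assume "0 < \<delta>" "\<delta> < \<delta>0"
    then have "eventually (\<lambda>t. s0 - \<delta> \<le> \<sigma> t) at_top" and "eventually (\<lambda>t. \<sigma> t \<le> s0 + \<delta>) at_top"
      using near[of "s0 - \<delta>"] near[of "s0 + \<delta>"]
      by (auto intro: eventually_ge_below_equilibrium[OF \<sigma> rates r persistent]
          eventually_le_above_equilibrium[OF \<sigma> rates r persistent])
    then show "eventually (\<lambda>t. s0 - \<delta> \<le> \<sigma> t \<and> \<sigma> t \<le> s0 + \<delta>) at_top"
      by (rule eventually_conj)
  qed
qed

lemma trajectory_tendsto_equilibrium:
  fixes k :: "real \<Rightarrow> nat \<Rightarrow> real"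
  assumes on_line: "\<forall>t\<ge>0. \<forall>i\<in>Y. z t i = line (\<sigma> t) i"
    and \<sigma>: "\<forall>t\<ge>0. (\<sigma> has_real_derivative G_fun Y R (k t) m (line (\<sigma> t)) 1) (at t within {0..})"
    and rates: "\<forall>j<length R. ((\<lambda>t. k t j) \<longlongrightarrow> K j) at_top"
    and persistent: "\<forall>i\<in>Y. 0 < Liminf at_top (\<lambda>t. ereal (z t i))"
  shows "\<forall>i\<in>Y. ((\<lambda>t. z t i) \<longlongrightarrow> line s0 i) at_top"
proof
  fix i assume "i \<in> Y"
  have on_line_ev: "eventually (\<lambda>t. \<forall>i\<in>Y. z t i = line (\<sigma> t) i) at_top"
    using eventually_ge_at_top[of 0] by eventually_elim (use on_line in blast)
  obtain r where r: "\<forall>i\<in>Y. 0 < r i" and r_le: "eventually (\<lambda>t. \<forall>i\<in>Y. r i \<le> z t i) at_top"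
    using eventually_ge_of_Liminf_pos[OF finite persistent] by blast
  from on_line_ev r_le have "eventually (\<lambda>t. \<forall>i\<in>Y. r i \<le> line (\<sigma> t) i) at_top"
    by eventually_elim simp
  then have "(\<sigma> \<longlongrightarrow> s0) at_top" by (rule tendsto_equilibrium[OF \<sigma> rates r])
  then have "((\<lambda>t. line (\<sigma> t) i) \<longlongrightarrow> line s0 i) at_top" by (intro tendsto_intros)
  moreover from on_line_ev have "eventually (\<lambda>t. line (\<sigma> t) i = z t i) at_top"
    by eventually_elim (use \<open>i \<in> Y\<close> in simp)
  ultimately show "((\<lambda>t. z t i) \<longlongrightarrow> line s0 i) at_top" by (rule Lim_transform_eventually)
qed

end

theorem theorem5p5:
  fixes S1 X1 S2 X2 :: "'s::finite set"
    and R1 R2 :: "'s rxn list"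
    and c10 y20 ybar1 ybar2 :: "'s \<Rightarrow> real"
    and traj1 traj2 c :: "real \<Rightarrow> 's \<Rightarrow> real"
  assumes crc1: "is_msCRC S1 R1 X1"
    and crc2: "is_msCRC S2 R2 X2"
    and comp: "composable S1 X1 S2 X2"
    \<comment> \<open>(A.1)+(A.2) for C^1: the solution from (x1_0, y1_0) has y1(t) -> ybar1\<close>
    and A1_1: "ode_sol S1 (mas_field S1 R1) traj1" "\<forall>i\<in>S1. traj1 0 i = c10 i"
    and A2_1: "\<forall>i\<in>S1 - X1. ((\<lambda>t. traj1 t i) \<longlongrightarrow> ybar1 i) at_top"
    \<comment> \<open>(A.1)+(A.2) for C^2 with input frozen at ybar1: y2(t) -> ybar2\<close>
    and A1_2: "ode_sol (S2 - X2) (mas_field S2 R2) traj2"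
      "\<forall>t\<ge>0. \<forall>i\<in>X2. traj2 t i = ybar1 i" "\<forall>i\<in>S2 - X2. traj2 0 i = y20 i"
    and A2_2: "\<forall>i\<in>S2 - X2. ((\<lambda>t. traj2 t i) \<longlongrightarrow> ybar2 i) at_top"
    and pos1: "\<forall>i\<in>S1 - X1. ybar1 i > 0"
    and pos2: "\<forall>i\<in>S2 - X2. ybar2 i > 0"
    \<comment> \<open>(1): the reduced system of C^2 has one-dimensional stoichiometric subspace\<close>
    and dim1: "dim (reduced_stoich (S2 - X2) R2) = 1"
    \<comment> \<open>(2)\<close>
    and cond2: "\<exists>(\<omega>::real^'s) (m::nat \<Rightarrow> int) (ut::('s \<Rightarrow> real) \<Rightarrow> real).
        \<omega> \<noteq> 0 \<and> (\<forall>i. i \<notin> S2 - X2 \<longrightarrow> \<omega> $ i = 0)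
      \<and> span {\<omega>} = reduced_stoich (S2 - X2) R2
      \<and> (\<forall>j<length R2. m j \<noteq> 0 \<and> proj_rvec (S2 - X2) (R2 ! j) = of_int (m j) *\<^sub>R \<omega>)
      \<and> (\<forall>y. (\<forall>i\<in>S2 - X2. y i > 0) \<longrightarrow> ut y > 0 \<and>
             G_fun (S2 - X2) R2 (\<lambda>j. frozen_rate S2 (S2 - X2) ybar1 (R2 ! j)) m y (ut y) = 0)
      \<and> (\<forall>y. (\<forall>i\<in>S2 - X2. y i > 0) \<longrightarrow>
             omega_dG (S2 - X2)
               (G_fun (S2 - X2) R2 (\<lambda>j. frozen_rate S2 (S2 - X2) ybar1 (R2 ! j)) m)
               \<omega> y (ut y) < 0)"
    \<comment> \<open>the coupled system and its initial condition\<close>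
    and coupled: "ode_sol S1 (mas_field S1 R1) c" "ode_sol (S2 - X2) (mas_field S2 R2) c"
    and coupled_init: "\<forall>i\<in>S1. c 0 i = c10 i" "\<forall>i\<in>S2 - X2. c 0 i = y20 i"
    \<comment> \<open>(3): persistence of y2 along the coupled trajectory\<close>
    and persistent: "\<forall>i\<in>S2 - X2. Liminf at_top (\<lambda>t. ereal (c t i)) > 0"
  shows "(\<forall>i\<in>S1 - X1. ((\<lambda>t. c t i) \<longlongrightarrow> ybar1 i) at_top)
       \<and> (\<forall>i\<in>S2 - X2. ((\<lambda>t. c t i) \<longlongrightarrow> ybar2 i) at_top)"
proof -
  define Y where "Y = S2 - X2"
  have "Y \<subseteq> S2" and "S2 - Y = X2" and "X2 = S1 - X1"
    using crc2 comp by (auto simp: is_msCRC_def composable_def Y_def)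
  have conv1: "\<forall>i\<in>S1 - X1. ((\<lambda>t. c t i) \<longlongrightarrow> ybar1 i) at_top"
    by (rule mas_ode_sol_same_limits[OF finite A1_1(1) coupled(1) _ _ A2_1])
       (use A1_1(2) coupled_init(1) in auto)
  define K where "K = (\<lambda>j. frozen_rate S2 Y ybar1 (R2 ! j))"
  obtain \<omega> m ut where "\<omega> \<noteq> 0" and \<omega>_Y: "\<forall>i. i \<notin> Y \<longrightarrow> \<omega> $ i = 0"
    and stoich: "\<forall>j<length R2. m j \<noteq> 0 \<and> proj_rvec Y (R2 ! j) = of_int (m j) *\<^sub>R \<omega>"
    and root: "\<forall>y. (\<forall>i\<in>Y. 0 < y i) \<longrightarrow> 0 < ut y \<and> G_fun Y R2 K m y (ut y) = 0"
    and transversal: "\<forall>y. (\<forall>i\<in>Y. 0 < y i) \<longrightarrow> omega_dG Y (G_fun Y R2 K m) \<omega> y (ut y) < 0"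
    using cond2 unfolding Y_def[symmetric] K_def by blast
  obtain i0 where "\<omega> $ i0 \<noteq> 0" using \<open>\<omega> \<noteq> 0\<close> by (auto simp: vec_eq_iff)
  with \<omega>_Y have "i0 \<in> Y" by blast
  have "\<forall>j<length R2. proj_rvec Y (R2 ! j) = of_int (m j) *\<^sub>R \<omega>" using stoich by blast
  note on_line = \<open>Y \<subseteq> S2\<close> this \<open>i0 \<in> Y\<close> \<open>\<omega> $ i0 \<noteq> 0\<close>
  have "\<forall>i\<in>Y. traj2 0 i = y20 i" and "\<forall>t\<ge>0. \<forall>i\<in>S2 - Y. traj2 t i = ybar1 i"
    and "\<forall>i\<in>Y. ((\<lambda>t. traj2 t i) \<longlongrightarrow> ybar2 i) at_top"
    using A1_2(2,3) A2_2 \<open>S2 - Y = X2\<close> by (simp_all add: Y_def)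
  from frozen_limit_on_line[OF A1_2(1)[folded Y_def] on_line this, folded K_def]
  obtain s where ybar2: "\<forall>i\<in>Y. ybar2 i = y20 i + s * \<omega> $ i"
    and equilibrium: "G_fun Y R2 K m (\<lambda>i. y20 i + s * \<omega> $ i) 1 = 0" by blast
  have "\<forall>i\<in>Y. c 0 i = y20 i" using coupled_init(2) by (simp add: Y_def)
  from mas_ode_sol_on_line[OF coupled(2)[folded Y_def] on_line this]
  obtain \<sigma> where c_line: "\<forall>t\<ge>0. \<forall>i\<in>Y. c t i = y20 i + \<sigma> t * \<omega> $ i"
    and d\<sigma>: "\<forall>t\<ge>0. (\<sigma> has_real_derivative G_fun Y R2 (\<lambda>j. frozen_rate S2 Y (c t) (R2 ! j)) m
      (\<lambda>i. y20 i + \<sigma> t * \<omega> $ i) 1) (at t within {0..})" by blast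
  interpret one_dim_reduced Y R2 K m \<omega> y20 ut s
  proof
    show "R2 \<noteq> []" using dim1 by (auto simp: reduced_stoich_def)
    show "\<forall>j<length R2. 0 < K j"
      unfolding K_def using crc2 pos1 \<open>S2 - Y = X2\<close> \<open>X2 = S1 - X1\<close> by (auto intro: frozen_rate_pos)
  qed (use stoich root transversal ybar2 pos2 equilibrium in \<open>auto simp: Y_def\<close>)
  have "\<forall>j<length R2. ((\<lambda>t. frozen_rate S2 Y (c t) (R2 ! j)) \<longlongrightarrow> K j) at_top"
    unfolding K_def using conv1 \<open>S2 - Y = X2\<close> \<open>X2 = S1 - X1\<close> by (auto intro!: frozen_rate_tendsto)
  then have "\<forall>i\<in>Y. ((\<lambda>t. c t i) \<longlongrightarrow> y20 i + s * \<omega> $ i) at_top"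
    using persistent by (intro trajectory_tendsto_equilibrium[OF c_line d\<sigma>]) (simp_all add: Y_def)
  with conv1 ybar2 show ?thesis by (simp add: Y_def)
qed

end
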